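(* If $\Gamma$ is a locally-finite undirected simple geodetic graph in which every isometrically embedded circuit has length at most five, then every embedded circuit in $\Gamma$ has diameter at most two.
   Context: A graph is geodetic if between any pair of vertices there is a unique shortest path (geodesic); in particular it is connected, with path metric $d$. A path $u_0,u_1,\dots,u_n$ is an embedded circuit (of length $n$) if $u_0,\dots,u_{n-1}$ are distinct and $u_0=u_n$ (for adjacent $u,v$, the path $u,v,u$ is an embedded circuit of length two). An embedded circuit is isometrically embedded if $d(u_i,u_j)=\min\{j-i,n+i-j\}$ for all $0\le i<j<n$. The diameter of an embedded circuit is the maximum of $d(u_i,u_j)$ over its vertices, with $d$ the distance in $\Gamma$. *)

theory Defs
  imports Main
begin

definition simple_graph :: "'a set \<Rightarrow> ('a \<Rightarrow> 'a \<Rightarrow> bool) \<Rightarrow> bool" where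
  "simple_graph V E \<longleftrightarrow>
     (\<forall>u v. E u v \<longrightarrow> u \<in> V \<and> v \<in> V) \<and>
     (\<forall>u v. E u v \<longrightarrow> E v u) \<and>
     (\<forall>u. \<not> E u u)"

definition locally_finite :: "'a set \<Rightarrow> ('a \<Rightarrow> 'a \<Rightarrow> bool) \<Rightarrow> bool" where
  "locally_finite V E \<longleftrightarrow> (\<forall>v\<in>V. finite {w. E v w})"

text \<open>A walk given as a nonempty vertex list with consecutive vertices adjacent;
  its length is the number of edges, i.e. length minus one.\<close>
definition walk :: "('a \<Rightarrow> 'a \<Rightarrow> bool) \<Rightarrow> 'a list \<Rightarrow> bool" where
  "walk E p \<longleftrightarrow> p \<noteq> [] \<and> (\<forall>i. Suc i < length p \<longrightarrow> E (p ! i) (p ! Suc i))"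

definition gdist :: "('a \<Rightarrow> 'a \<Rightarrow> bool) \<Rightarrow> 'a \<Rightarrow> 'a \<Rightarrow> nat" where
  "gdist E u v = (LEAST n. \<exists>p. walk E p \<and> hd p = u \<and> last p = v \<and> length p = Suc n)"

text \<open>Geodetic: between any two vertices there is a unique shortest path
  (in particular the graph is connected).\<close>
definition geodetic :: "'a set \<Rightarrow> ('a \<Rightarrow> 'a \<Rightarrow> bool) \<Rightarrow> bool" where
  "geodetic V E \<longleftrightarrow>
     (\<forall>u\<in>V. \<forall>v\<in>V. \<exists>!p. walk E p \<and> hd p = u \<and> last p = v \<and> length p = Suc (gdist E u v))"

definition embedded_circuit :: "('a \<Rightarrow> 'a \<Rightarrow> bool) \<Rightarrow> (nat \<Rightarrow> 'a) \<Rightarrow> nat \<Rightarrow> bool" where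
  "embedded_circuit E u n \<longleftrightarrow>
     (\<forall>i<n. E (u i) (u (Suc i))) \<and> inj_on u {..<n} \<and> u n = u 0"

definition isometric_circuit :: "('a \<Rightarrow> 'a \<Rightarrow> bool) \<Rightarrow> (nat \<Rightarrow> 'a) \<Rightarrow> nat \<Rightarrow> bool" where
  "isometric_circuit E u n \<longleftrightarrow> embedded_circuit E u n \<and>
     (\<forall>i j. i < j \<and> j < n \<longrightarrow> gdist E (u i) (u j) = min (j - i) (n + i - j))"

definition circuit_diameter :: "('a \<Rightarrow> 'a \<Rightarrow> bool) \<Rightarrow> (nat \<Rightarrow> 'a) \<Rightarrow> nat \<Rightarrow> nat" where
  "circuit_diameter E u n = Max {gdist E (u i) (u j) | i j. i \<le> n \<and> j \<le> n}"

end

theory Submission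
  imports Defs
begin

text \<open>
  Induct on the length of circuits: assume that every shorter circuit has diameter at most 2, and
  let \<open>C\<close> be a circuit that does not. A geodesic between two vertices of \<open>C\<close> whose interior avoids
  \<open>C\<close> is either an edge of \<open>C\<close> or, with the two arcs of \<open>C\<close> between its ends, forms two shorter
  circuits, so that its ends are within distance 2 of every vertex of \<open>C\<close>. Hence \<open>C\<close> is
  isometric (and then has at most 5 vertices) or has two such central vertices, and a geodesic
  from \<open>C\<close> to a non-central vertex of \<open>C\<close> enters it along \<open>C\<close>.

  Measure levels from a vertex \<open>c 0\<close> of \<open>C\<close> that is not central, and let \<open>L \<ge> 3\<close> be the largest
  level on \<open>C\<close>. From a vertex of level \<open>L\<close>, the levels drop by one at each step along \<open>C\<close> in both
  directions down to level 2. The two ends of this window have a common predecessor \<open>g\<close>: otherwise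
  closing the window through \<open>c 0\<close> gives a circuit of length \<open>2 L + 1\<close>, which by minimality has the
  length of \<open>C\<close>, and then \<open>C\<close> is an odd circuit isometric from \<open>c 0\<close>, which the dichotomy above
  excludes. Closing the window through \<open>g\<close> instead forces \<open>L = 3\<close>, and then \<open>g\<close> is a neighbour of
  \<open>c 0\<close> on \<open>C\<close>: the five vertices following \<open>c 0\<close> on \<open>C\<close> in a suitable direction form a pentagon
  with a chord. Doing the same from the other neighbour of \<open>c 0\<close> forces \<open>C\<close> to have length 8 and a
  second chord, and then two vertices at distance 2 have two midpoints.
\<close>

section \<open>Walks and arcs\<close>

lemma walk_Nil [simp]: "\<not> walk E []"
  by (simp add: walk_def)

lemma walk_single [simp]: "walk E [a]"
  by (simp add: walk_def)

lemma walk_Cons_Cons [simp]: "walk E (a # b # p) \<longleftrightarrow> E a b \<and> walk E (b # p)"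
proof
  assume "walk E (a # b # p)"
  then show "E a b \<and> walk E (b # p)"
    unfolding walk_def
    by (metis Suc_less_eq length_Cons list.distinct(1) nth_Cons_0 nth_Cons_Suc zero_less_Suc)
next
  assume h: "E a b \<and> walk E (b # p)"
  show "walk E (a # b # p)" unfolding walk_def
  proof (intro conjI allI impI)
    fix i assume "Suc i < length (a # b # p)"
    then show "E ((a # b # p) ! i) ((a # b # p) ! Suc i)"
      using h unfolding walk_def by (cases i) auto
  qed simp
qed

lemma walk_append:
  "xs \<noteq> [] \<Longrightarrow> ys \<noteq> [] \<Longrightarrow> walk E (xs @ ys) \<longleftrightarrow> walk E xs \<and> walk E ys \<and> E (last xs) (hd ys)"
proof (induction xs)
  case (Cons a xs)
  then show ?case by (cases xs; cases ys) auto
qed simp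

lemma walk_append_tl:
  assumes "walk E p" "walk E q" "last p = hd q"
  shows "walk E (p @ tl q)"
proof (cases "tl q")
  case (Cons x r)
  have "p \<noteq> []" using assms(1) by auto
  with assms Cons show ?thesis by (cases q) (auto simp: walk_append)
qed (simp add: assms)

lemma walk_rev:
  assumes "\<And>a b. E a b \<Longrightarrow> E b a" and "walk E p"
  shows "walk E (rev p)"
  using assms(2)
proof (induction p)
  case (Cons a p)
  show ?case
  proof (cases p)
    case (Cons b q)
    then have "walk E (rev p)" "E b a" using Cons.IH Cons.prems assms(1) by auto
    then show ?thesis using Cons walk_append[of "rev p" "[a]" E] by simp
  qed simp
qed simp

lemma last_append_tl: "p \<noteq> [] \<Longrightarrow> q \<noteq> [] \<Longrightarrow> last p = hd q \<Longrightarrow> last (p @ tl q) = last q"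
  by (cases q) auto

lemma walk_drop: "walk E p \<Longrightarrow> k < length p \<Longrightarrow> walk E (drop k p)"
  unfolding walk_def by auto

lemma walk_take: "walk E p \<Longrightarrow> 0 < k \<Longrightarrow> walk E (take k p)"
  unfolding walk_def by auto

lemma walk_nth: "walk E p \<Longrightarrow> Suc i < length p \<Longrightarrow> E (p ! i) (p ! Suc i)"
  unfolding walk_def by auto

lemma gdist_le_walk: "walk E p \<Longrightarrow> hd p = a \<Longrightarrow> last p = b \<Longrightarrow> gdist E a b \<le> length p - 1"
  unfolding gdist_def
  by (rule Least_le) (metis Suc_pred' length_greater_0_conv walk_def)

lemma gdist_self [simp]: "gdist E a a = 0"
  using gdist_le_walk[of E "[a]" a a] by simp

lemma gdist_edge_le: "E a b \<Longrightarrow> gdist E a b \<le> 1"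
  using gdist_le_walk[of E "[a, b]" a b] by simp

definition arc :: "(int \<Rightarrow> 'a) \<Rightarrow> int \<Rightarrow> nat \<Rightarrow> 'a list" where
  "arc c i m = map (\<lambda>k. c (i + int k)) [0..<m]"

lemma arc_length [simp]: "length (arc c i m) = m"
  unfolding arc_def by simp

lemma arc_nth [simp]: "k < m \<Longrightarrow> arc c i m ! k = c (i + int k)"
  unfolding arc_def by simp

lemma arc_Suc: "arc c i (Suc m) = arc c i m @ [c (i + int m)]"
  unfolding arc_def by simp

lemma arc_Nil_iff [simp]: "arc c i m = [] \<longleftrightarrow> m = 0"
  unfolding arc_def by simp

lemma arc_set: "x \<in> set (arc c i m) \<longleftrightarrow> (\<exists>k<m. x = c (i + int k))"
  unfolding arc_def by auto

lemma arc_mem: "k < m \<Longrightarrow> c (i + int k) \<in> set (arc c i m)"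
  unfolding arc_set by blast

lemma arc_hd: "0 < m \<Longrightarrow> hd (arc c i m) = c i"
  unfolding arc_def by (simp add: hd_map)

lemma arc_last: "0 < m \<Longrightarrow> last (arc c i m) = c (i + int m - 1)"
  by (cases m) (auto simp: arc_Suc)

section \<open>Geodetic graphs\<close>

locale geodetic_graph =
  fixes V :: "'a set" and E :: "'a \<Rightarrow> 'a \<Rightarrow> bool"
  assumes simple: "simple_graph V E" and geodetic: "geodetic V E"
begin

abbreviation \<delta> :: "'a \<Rightarrow> 'a \<Rightarrow> nat" where "\<delta> \<equiv> gdist E"

definition geodesic :: "'a list \<Rightarrow> 'a \<Rightarrow> 'a \<Rightarrow> bool" where
  "geodesic p a b \<longleftrightarrow> walk E p \<and> hd p = a \<and> last p = b \<and> length p = Suc (\<delta> a b)"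

lemma edge_in_V: "E a b \<Longrightarrow> a \<in> V \<and> b \<in> V"
  using simple unfolding simple_graph_def by blast

lemma edge_sym: "E a b \<Longrightarrow> E b a"
  using simple unfolding simple_graph_def by blast

lemma edge_irrefl: "\<not> E a a"
  using simple unfolding simple_graph_def by blast

lemma geodesic_exists: "a \<in> V \<Longrightarrow> b \<in> V \<Longrightarrow> \<exists>p. geodesic p a b"
  using geodetic unfolding geodetic_def geodesic_def by blast

lemma geodesic_unique: "a \<in> V \<Longrightarrow> b \<in> V \<Longrightarrow> geodesic p a b \<Longrightarrow> geodesic q a b \<Longrightarrow> p = q"
  using geodetic unfolding geodetic_def geodesic_def by blast

lemma geodesic_not_Nil: "geodesic p a b \<Longrightarrow> p \<noteq> []"
  unfolding geodesic_def by auto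

lemma walk_in_V: "walk E p \<Longrightarrow> hd p \<in> V \<Longrightarrow> x \<in> set p \<Longrightarrow> x \<in> V"
proof (induction p)
  case (Cons a p)
  show ?case
  proof (cases p)
    case (Cons b q)
    with Cons.prems have "E a b" "walk E p" by auto
    with Cons.IH Cons.prems \<open>p = b # q\<close> edge_in_V show ?thesis by auto
  qed (use Cons.prems in simp)
qed simp

lemma gdist_eq_0_imp_eq: "a \<in> V \<Longrightarrow> b \<in> V \<Longrightarrow> \<delta> a b = 0 \<Longrightarrow> a = b"
  using geodesic_exists[of a b] unfolding geodesic_def
  by (metis last_ConsL length_0_conv length_Suc_conv list.sel(1))

lemma gdist_sym: "a \<in> V \<Longrightarrow> b \<in> V \<Longrightarrow> \<delta> a b = \<delta> b a"
proof -
  have *: "\<delta> b a \<le> \<delta> a b" if V: "a \<in> V" "b \<in> V" for a b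
  proof -
    obtain p where p: "geodesic p a b" using geodesic_exists V by blast
    then have "walk E (rev p)" "p \<noteq> []"
      using walk_rev[of E p] edge_sym unfolding geodesic_def by auto
    then show ?thesis
      using p gdist_le_walk[of E "rev p" b a] unfolding geodesic_def by (simp add: hd_rev last_rev)
  qed
  show "a \<in> V \<Longrightarrow> b \<in> V \<Longrightarrow> ?thesis" using *[of a b] *[of b a] by simp
qed

lemma gdist_triangle: "a \<in> V \<Longrightarrow> b \<in> V \<Longrightarrow> c \<in> V \<Longrightarrow> \<delta> a c \<le> \<delta> a b + \<delta> b c"
proof -
  assume V: "a \<in> V" "b \<in> V" "c \<in> V"
  obtain p where p: "geodesic p a b" using geodesic_exists V by blast
  obtain q where q: "geodesic q b c" using geodesic_exists V by blast
  have ne: "p \<noteq> []" "q \<noteq> []" using p q geodesic_not_Nil by auto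
  have "walk E (p @ tl q)" using p q walk_append_tl unfolding geodesic_def by metis
  moreover have "hd (p @ tl q) = a" "last (p @ tl q) = c"
    using p q ne unfolding geodesic_def by (auto simp: last_append_tl)
  ultimately have "\<delta> a c \<le> length (p @ tl q) - 1" by (rule gdist_le_walk)
  then show ?thesis using p q unfolding geodesic_def by simp
qed

lemma gdist_edge: "E a b \<Longrightarrow> \<delta> a b = 1"
  using gdist_edge_le[of E a b] gdist_eq_0_imp_eq[of a b] edge_in_V edge_irrefl
  by fastforce

lemma gdist_eq_1_imp_edge: "a \<in> V \<Longrightarrow> b \<in> V \<Longrightarrow> \<delta> a b = 1 \<Longrightarrow> E a b"
proof -
  assume "a \<in> V" "b \<in> V" "\<delta> a b = 1"
  then obtain p where "walk E p" "hd p = a" "last p = b" "length p = 2"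
    using geodesic_exists unfolding geodesic_def by fastforce
  then show ?thesis
    by (cases p; cases "tl p") (auto simp: walk_def)
qed

lemma gdist_edge_step: "r \<in> V \<Longrightarrow> E x y \<Longrightarrow> \<delta> r y \<le> \<delta> r x + 1"
  using gdist_triangle[of r x y] gdist_edge[of x y] edge_in_V by fastforce

lemma geodesic_gdist_nth:
  assumes p: "geodesic p a b" and a: "a \<in> V" and ij: "i \<le> j" "j < length p"
  shows "\<delta> (p ! i) (p ! j) = j - i"
proof -
  have w: "walk E p" and hp: "hd p = a" and lp: "last p = b" and len: "length p = Suc (\<delta> a b)"
    using p unfolding geodesic_def by auto
  have ne: "p \<noteq> []" using w by auto
  have in_V: "x \<in> set p \<Longrightarrow> x \<in> V" for x using walk_in_V[OF w] hp a by auto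
  have V: "b \<in> V" "p ! i \<in> V" "p ! j \<in> V" using in_V lp ne ij by auto
  have "\<delta> (p ! i) (p ! j) \<le> j - i"
    using gdist_le_walk[of E "drop i (take (Suc j) p)"] walk_drop[OF walk_take[OF w]] ij
    by (simp add: hd_drop_conv_nth last_conv_nth)
  moreover have "\<delta> a (p ! i) \<le> i"
    using gdist_le_walk[of E "take (Suc i) p"] walk_take[OF w] hp ne ij
    by (simp add: last_conv_nth min_absorb1)
  moreover have "\<delta> (p ! j) b \<le> length p - 1 - j"
    using gdist_le_walk[of E "drop j p"] walk_drop[OF w] lp ij
    by (simp add: hd_drop_conv_nth)
  moreover have "\<delta> a b \<le> \<delta> a (p ! i) + \<delta> (p ! i) (p ! j) + \<delta> (p ! j) b"
    using gdist_triangle[OF a V(2,1)] gdist_triangle[OF V(2,3,1)] by linarith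
  ultimately show ?thesis using len ij by linarith
qed

lemma geodesic_drop:
  assumes g: "geodesic g a b" and a: "a \<in> V" and t: "t < length g"
  shows "geodesic (drop t g) (g ! t) b"
proof -
  have "\<delta> (g ! t) (g ! (length g - 1)) = length g - 1 - t"
    using geodesic_gdist_nth[OF g a, of t "length g - 1"] t by simp
  moreover have "g ! (length g - 1) = b"
    using g last_conv_nth[OF geodesic_not_Nil[OF g]] unfolding geodesic_def by metis
  moreover have "walk E (drop t g)" using g t walk_drop[of E g t] unfolding geodesic_def by simp
  ultimately show ?thesis
    using g t unfolding geodesic_def by (simp add: hd_drop_conv_nth)
qed

lemma geodesic_distinct:
  assumes "geodesic p a b" "a \<in> V"
  shows "distinct p"
proof -
  have "p ! i \<noteq> p ! j" if "i < j" "j < length p" for i j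
    using geodesic_gdist_nth[OF assms, of i j] that by auto
  then show ?thesis
    unfolding distinct_conv_nth by (metis linorder_neqE_nat)
qed

lemma geodesic_snoc:
  assumes "geodesic p r w" "E w v" "\<delta> r w + 1 = \<delta> r v"
  shows "geodesic (p @ [v]) r v"
  using assms geodesic_not_Nil[OF assms(1)] unfolding geodesic_def by (simp add: walk_append)

lemma predecessor_unique:
  assumes r: "r \<in> V" and e: "E w v" "E w' v" and l: "\<delta> r w + 1 = \<delta> r v" "\<delta> r w' + 1 = \<delta> r v"
  shows "w = w'"
proof -
  have V: "w \<in> V" "w' \<in> V" "v \<in> V" using e edge_in_V by auto
  obtain p q where p: "geodesic p r w" and q: "geodesic q r w'" using geodesic_exists r V by meson
  have "p @ [v] = q @ [v]"
    using geodesic_unique[OF r V(3) geodesic_snoc[OF p e(1) l(1)] geodesic_snoc[OF q e(2) l(2)]] .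
  then show ?thesis using p q unfolding geodesic_def by auto
qed

lemma geodesic_nth_between:
  assumes V: "r \<in> V" "u \<in> V" "v \<in> V" and s: "\<delta> r u + \<delta> u v = \<delta> r v" and p: "geodesic p r v"
  shows "p ! \<delta> r u = u"
proof -
  obtain g1 g2 where g1: "geodesic g1 r u" and g2: "geodesic g2 u v" using geodesic_exists V by meson
  have ne: "g1 \<noteq> []" "g2 \<noteq> []" using g1 g2 geodesic_not_Nil by auto
  have "walk E (g1 @ tl g2)" using g1 g2 walk_append_tl unfolding geodesic_def by metis
  moreover have "hd (g1 @ tl g2) = r" "last (g1 @ tl g2) = v"
    using g1 g2 ne unfolding geodesic_def by (auto simp: last_append_tl)
  moreover have "length (g1 @ tl g2) = Suc (\<delta> r v)" using g1 g2 s unfolding geodesic_def by simp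
  ultimately have "g1 @ tl g2 = p" using geodesic_unique[OF V(1,3) _ p] unfolding geodesic_def by blast
  moreover have "(g1 @ tl g2) ! \<delta> r u = u"
  proof -
    have "\<delta> r u = length g1 - 1" "last g1 = u" using g1 unfolding geodesic_def by auto
    then show ?thesis using ne(1) by (simp add: nth_append last_conv_nth)
  qed
  ultimately show ?thesis by simp
qed

lemma predecessor_exists:
  assumes V: "r \<in> V" "v \<in> V" and ne: "v \<noteq> r"
  shows "\<exists>w. E w v \<and> \<delta> r w + 1 = \<delta> r v"
proof -
  obtain p where p: "geodesic p r v" using geodesic_exists V by blast
  have len: "length p = Suc (\<delta> r v)" and pne: "p \<noteq> []"
    using p geodesic_not_Nil unfolding geodesic_def by auto
  obtain k where k: "\<delta> r v = Suc k" using gdist_eq_0_imp_eq[OF V] ne by (cases "\<delta> r v") auto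
  have "E (p ! k) (p ! Suc k)" using walk_nth[of E p k] p len k unfolding geodesic_def by simp
  moreover have "p ! Suc k = v" "p ! 0 = r"
    using p pne len k unfolding geodesic_def by (simp_all add: last_conv_nth hd_conv_nth)
  moreover have "\<delta> (p ! 0) (p ! k) = k" using geodesic_gdist_nth[OF p V(1), of 0 k] len k by simp
  ultimately show ?thesis using k by auto
qed

lemma midpoint_exists:
  assumes V: "a \<in> V" "b \<in> V" and d: "\<delta> a b = 2"
  shows "\<exists>w. E a w \<and> E w b"
proof -
  obtain p where "geodesic p a b" using geodesic_exists V by blast
  then obtain x y z where "p = [x, y, z]" "walk E p" "hd p = a" "last p = b"
    using d unfolding geodesic_def by (auto simp: length_Suc_conv numeral_2_eq_2)
  then show ?thesis by auto
qed

lemma midpoint_unique: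
  assumes "E a m" "E m b" "E a m'" "E m' b" "\<delta> a b = 2"
  shows "m = m'"
proof -
  have "a \<in> V" "b \<in> V" using assms edge_in_V by auto
  moreover have "geodesic [a, m, b] a b" "geodesic [a, m', b] a b"
    using assms unfolding geodesic_def by simp_all
  ultimately show ?thesis using geodesic_unique by blast
qed

lemma gdist_eq_2:
  assumes "E a m" "E m b" "a \<noteq> b" "\<not> E a b"
  shows "\<delta> a b = 2"
proof -
  have V: "a \<in> V" "b \<in> V" using assms edge_in_V by auto
  have "\<delta> a b \<le> 2" using gdist_le_walk[of E "[a, m, b]" a b] assms by simp
  moreover have "\<delta> a b \<noteq> 0" "\<delta> a b \<noteq> 1"
    using gdist_eq_0_imp_eq[OF V] gdist_eq_1_imp_edge[OF V] assms by auto
  ultimately show ?thesis by linarith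
qed

section \<open>Circuits indexed by integers\<close>

text \<open>An embedded circuit of length \<open>n\<close>, traversed periodically: indices are integers modulo \<open>n\<close>,
  so that rotations and reflections of the circuit are again of this form.\<close>
definition int_circuit :: "(int \<Rightarrow> 'a) \<Rightarrow> int \<Rightarrow> bool" where
  "int_circuit c n \<longleftrightarrow> 3 \<le> n \<and> (\<forall>i. E (c i) (c (i + 1))) \<and> (\<forall>i j. c i = c j \<longleftrightarrow> i mod n = j mod n)"

lemma int_circuit_ge_3: "int_circuit c n \<Longrightarrow> 3 \<le> n"
  unfolding int_circuit_def by auto

lemma int_circuit_edge: "int_circuit c n \<Longrightarrow> E (c i) (c (i + 1))"
  unfolding int_circuit_def by auto

lemma int_circuit_edge_sym: "int_circuit c n \<Longrightarrow> E (c (i + 1)) (c i)"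
  using int_circuit_edge edge_sym by blast

lemma int_circuit_edge_pred: "int_circuit c n \<Longrightarrow> E (c i) (c (i - 1))"
  using int_circuit_edge[of c n "i - 1"] edge_sym by simp

lemma int_circuit_edge_from_pred: "int_circuit c n \<Longrightarrow> E (c (i - 1)) (c i)"
  using int_circuit_edge[of c n "i - 1"] by simp

lemma int_circuit_eq_iff: "int_circuit c n \<Longrightarrow> c i = c j \<longleftrightarrow> i mod n = j mod n"
  unfolding int_circuit_def by auto

lemma int_circuit_eq_iff_dvd: "int_circuit c n \<Longrightarrow> c i = c j \<longleftrightarrow> n dvd (i - j)"
  using int_circuit_eq_iff mod_eq_dvd_iff by blast

lemma int_circuit_in_V: "int_circuit c n \<Longrightarrow> c i \<in> V"
  using int_circuit_edge edge_in_V by blast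

lemma int_circuit_mod: "int_circuit c n \<Longrightarrow> c (i mod n) = c i"
  using int_circuit_eq_iff by simp

lemma int_circuit_add_period: "int_circuit c n \<Longrightarrow> c (i + n) = c i"
  using int_circuit_eq_iff by simp

lemma int_circuit_diff_period: "int_circuit c n \<Longrightarrow> c (i - n) = c i"
  using int_circuit_eq_iff by simp

lemma int_circuit_neq:
  assumes "int_circuit c n" "i < j" "j < i + n"
  shows "c i \<noteq> c j"
proof
  assume "c i = c j"
  then have "n dvd (j - i)" using int_circuit_eq_iff_dvd[OF assms(1), of j i] by simp
  then show False using zdvd_imp_le[of n "j - i"] assms(2,3) by simp
qed

lemma int_circuit_affine:
  assumes c: "int_circuit c n" and s: "s = 1 \<or> s = -1"
  shows "int_circuit (\<lambda>k. c (p + s * k)) n"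
  unfolding int_circuit_def
proof (intro conjI allI)
  show "3 \<le> n" using int_circuit_ge_3[OF c] .
next
  fix i
  show "E (c (p + s * i)) (c (p + s * (i + 1)))"
  proof (cases "s = 1")
    case True
    then show ?thesis using int_circuit_edge[OF c, of "p + i"] by (simp add: add.assoc)
  next
    case False
    then have "s = -1" using s by simp
    then show ?thesis using int_circuit_edge_pred[OF c, of "p - i"] by (simp add: algebra_simps)
  qed
next
  fix i j
  have "s * (i - j) = i - j \<or> s * (i - j) = - (i - j)" using s by auto
  then have "n dvd (s * (i - j)) \<longleftrightarrow> n dvd (i - j)" by (metis dvd_minus_iff)
  moreover have "c (p + s * i) = c (p + s * j) \<longleftrightarrow> n dvd (s * (i - j))"
    using int_circuit_eq_iff_dvd[OF c] by (simp add: algebra_simps)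
  ultimately show "c (p + s * i) = c (p + s * j) \<longleftrightarrow> i mod n = j mod n"
    by (simp add: mod_eq_dvd_iff)
qed

lemma int_circuit_shift: "int_circuit c n \<Longrightarrow> int_circuit (\<lambda>k. c (p + k)) n"
  using int_circuit_affine[of c n 1 p] by simp

lemma int_circuit_reflect: "int_circuit c n \<Longrightarrow> int_circuit (\<lambda>k. c (p - k)) n"
  using int_circuit_affine[of c n "-1" p] by simp

lemma arc_walk: "int_circuit c n \<Longrightarrow> 0 < m \<Longrightarrow> walk E (arc c i m)"
proof (induction m)
  case (Suc m)
  show ?case
  proof (cases "m = 0")
    case False
    then have "walk E (arc c i m)" "E (last (arc c i m)) (c (i + int m))"
      using Suc arc_last[of m c i] int_circuit_edge_from_pred[OF Suc.prems(1), of "i + int m"] by simp_all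
    then show ?thesis using False by (simp add: arc_Suc walk_append)
  qed (simp add: arc_def)
qed simp

lemma arc_distinct:
  assumes c: "int_circuit c n" and m: "int m \<le> n"
  shows "distinct (arc c i m)"
proof -
  have neq: "c (i + int k) \<noteq> c (i + int k')" if "k < k'" "k' < m" for k k'
    by (rule int_circuit_neq[OF c]) (use that m in auto)
  show ?thesis unfolding distinct_conv_nth
  proof (intro allI impI)
    fix k k' assume k: "k < length (arc c i m)" "k' < length (arc c i m)" "k \<noteq> k'"
    show "arc c i m ! k \<noteq> arc c i m ! k'"
    proof (cases "k < k'")
      case True
      then show ?thesis using neq[of k k'] k by simp
    next
      case False
      then have "c (i + int k) \<noteq> c (i + int k')" using neq[of k' k] k by (simp add: not_sym)
      then show ?thesis using k by simp
    qed
  qed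
qed

lemma gdist_arc_le:
  assumes c: "int_circuit c n" and a: "0 \<le> a"
  shows "int (\<delta> (c i) (c (i + a))) \<le> a"
proof -
  let ?p = "arc c i (nat a + 1)"
  have "walk E ?p" by (rule arc_walk[OF c]) simp
  moreover have "hd ?p = c i" "last ?p = c (i + a)"
    using a by (simp_all add: arc_hd arc_last)
  ultimately have "\<delta> (c i) (c (i + a)) \<le> nat a"
    using gdist_le_walk[of E ?p "c i" "c (i + a)"] by simp
  then show ?thesis using a by linarith
qed

lemma gdist_coarc_le:
  assumes c: "int_circuit c n" and a: "0 \<le> a" "a \<le> n"
  shows "int (\<delta> (c i) (c (i + a))) \<le> n - a"
proof -
  have "int (\<delta> (c (i - 0)) (c (i - (0 + (n - a))))) \<le> n - a"
    using gdist_arc_le[OF int_circuit_reflect[OF c, of i], of "n - a" 0] a by simp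
  moreover have "c (i - (0 + (n - a))) = c (i + a)"
    using int_circuit_diff_period[OF c, of "i + a"] by (simp add: algebra_simps)
  ultimately show ?thesis by simp
qed

definition list_circuit :: "'a list \<Rightarrow> bool" where
  "list_circuit xs \<longleftrightarrow> 3 \<le> length xs \<and> distinct xs \<and> walk E (xs @ [hd xs])"

text \<open>The hypothesis of the induction on the length of a circuit.\<close>
definition narrow_below :: "int \<Rightarrow> bool" where
  "narrow_below n \<longleftrightarrow>
     (\<forall>xs. list_circuit xs \<longrightarrow> int (length xs) < n \<longrightarrow> (\<forall>a\<in>set xs. \<forall>b\<in>set xs. \<delta> a b \<le> 2))"

lemma narrow_belowD:
  "narrow_below n \<Longrightarrow> list_circuit xs \<Longrightarrow> int (length xs) < n \<Longrightarrow> a \<in> set xs \<Longrightarrow> b \<in> set xs \<Longrightarrow> \<delta> a b \<le> 2"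
  unfolding narrow_below_def by blast

lemma arc_list_circuit:
  assumes c: "int_circuit c n" and m: "0 < m" "int m \<le> n" "3 \<le> m + length ws"
    and ws: "distinct ws" "set ws \<inter> set (arc c i m) = {}"
    and closing: "walk E (c (i + int m - 1) # ws @ [c i])"
  shows "list_circuit (arc c i m @ ws)"
proof -
  have "walk E (ws @ [c i])" "E (c (i + int m - 1)) (hd (ws @ [c i]))"
    using closing walk_append[of "[c (i + int m - 1)]" "ws @ [c i]" E] by auto
  then have "walk E (arc c i m @ ws @ [c i])"
    using arc_walk[OF c m(1)] arc_last[OF m(1), of c i] m(1) by (subst walk_append) auto
  then show ?thesis
    unfolding list_circuit_def using arc_distinct[OF c m(2), of i] arc_hd[OF m(1), of c i] ws m by auto
qed

lemma int_circuit_of_list_circuit: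
  assumes xs: "list_circuit xs"
  defines "N \<equiv> length xs"
  shows "int_circuit (\<lambda>k. xs ! nat (k mod int N)) (int N)"
  unfolding int_circuit_def
proof (intro conjI allI)
  have N: "3 \<le> N" "distinct xs" "walk E (xs @ [hd xs])" using xs unfolding list_circuit_def N_def by auto
  then show "3 \<le> int N" by simp
  fix i
  define j where "j = nat (i mod int N)"
  have j: "j < N" "int j = i mod int N" unfolding j_def using N by (simp_all add: nat_less_iff)
  have "(i + 1) mod int N = (int j + 1) mod int N" using j by (simp add: mod_add_left_eq)
  also have "\<dots> = int ((j + 1) mod N)" by (simp add: zmod_int add.commute)
  finally
  have succ: "nat ((i + 1) mod int N) = (j + 1) mod N" by simp
  have "E ((xs @ [hd xs]) ! j) ((xs @ [hd xs]) ! Suc j)" using walk_nth[OF N(3), of j] j(1) N_def by simp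
  moreover have "xs ! nat (i mod int N) = xs ! j" "xs ! nat ((i + 1) mod int N) = xs ! ((j + 1) mod N)"
    using succ unfolding j_def by simp_all
  moreover have "N \<noteq> 0" using N by simp
  moreover have "Suc j < N \<or> Suc j = N" using j(1) by linarith
  ultimately show "E (xs ! nat (i mod int N)) (xs ! nat ((i + 1) mod int N))"
    using j(1) unfolding N_def by (auto simp: nth_append hd_conv_nth)
next
  fix i j
  have N: "0 < N" "distinct xs" using xs unfolding list_circuit_def N_def by auto
  then have "nat (i mod int N) < length xs" "nat (j mod int N) < length xs"
    unfolding N_def by (simp_all add: nat_less_iff)
  then show "xs ! nat (i mod int N) = xs ! nat (j mod int N) \<longleftrightarrow> i mod int N = j mod int N"
    using nth_eq_iff_index_eq[OF N(2)] N(1) by (simp add: eq_nat_nat_iff)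
qed

lemma embedded_circuit_list_circuit:
  assumes u: "embedded_circuit E u n" and n: "3 \<le> n"
  shows "list_circuit (map u [0..<n])"
proof -
  have "walk E (map u [0..<Suc n])"
    using u unfolding embedded_circuit_def walk_def by (auto simp del: upt_Suc)
  moreover have "map u [0..<n] @ [hd (map u [0..<n])] = map u [0..<Suc n]"
    using u n unfolding embedded_circuit_def by (simp add: hd_map)
  ultimately show ?thesis
    using u n unfolding list_circuit_def embedded_circuit_def by (simp add: distinct_map lessThan_atLeast0)
qed

lemma embedded_circuit_vertex_in_list:
  assumes u: "embedded_circuit E u n" and "0 < n" "k \<le> n"
  shows "u k \<in> set (map u [0..<n])"
  using assms unfolding embedded_circuit_def by (cases "k = n") auto

lemma short_embedded_circuit_gdist:
  assumes u: "embedded_circuit E u n" and n: "n \<le> 2" and ij: "i \<le> n" "j \<le> n"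
  shows "\<delta> (u i) (u j) \<le> 1"
proof -
  have "n \<noteq> 1" using u edge_irrefl unfolding embedded_circuit_def by force
  then consider "n = 0" | "n = 2" using n by linarith
  then show ?thesis
  proof cases
    case 2
    then have "E (u 0) (u 1)" "u 2 = u 0" using u unfolding embedded_circuit_def by auto
    moreover have "u i \<in> {u 0, u 1}" "u j \<in> {u 0, u 1}"
      using ij 2 \<open>u 2 = u 0\<close> by (auto simp: le_Suc_eq numeral_2_eq_2)
    ultimately show ?thesis using gdist_edge_le edge_sym by fastforce
  qed (use ij in simp)
qed

section \<open>Chords and central vertices\<close>

definition interior_off :: "(int \<Rightarrow> 'a) \<Rightarrow> 'a list \<Rightarrow> bool" where
  "interior_off c Q \<longleftrightarrow> (\<forall>t. 0 < t \<and> t < length Q - 1 \<longrightarrow> Q ! t \<notin> range c)"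

definition short_chord :: "(int \<Rightarrow> 'a) \<Rightarrow> int \<Rightarrow> 'a list \<Rightarrow> int \<Rightarrow> int \<Rightarrow> bool" where
  "short_chord c n Q i a \<longleftrightarrow> walk E Q \<and> distinct Q \<and> hd Q = c i \<and> last Q = c (i + a) \<and>
     interior_off c Q \<and> int (length Q) - 1 < a \<and> int (length Q) - 1 < n - a"

lemma short_chord_length:
  assumes c: "int_circuit c n" and Q: "short_chord c n Q i a"
  shows "2 \<le> length Q"
proof (rule ccontr)
  assume "\<not> 2 \<le> length Q"
  moreover have "Q \<noteq> []" using Q unfolding short_chord_def by auto
  ultimately obtain x where "Q = [x]" by (cases Q) (auto simp: Suc_le_eq)
  then have "c i = c (i + a)" "0 < a" "a < n" using Q unfolding short_chord_def by auto
  moreover have "c i \<noteq> c (i + a)" if "0 < a" "a < n"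
    by (rule int_circuit_neq[OF c]) (use that in simp_all)
  ultimately show False by blast
qed

lemma short_chord_reverse:
  assumes c: "int_circuit c n" and Q: "short_chord c n Q i a"
  shows "short_chord (\<lambda>k. c (i + a + k)) n (rev Q) 0 (n - a)"
proof -
  have ne: "Q \<noteq> []" using Q unfolding short_chord_def by auto
  have "interior_off (\<lambda>k. c (i + a + k)) (rev Q)"
    unfolding interior_off_def
  proof (intro allI impI)
    fix s assume s: "0 < s \<and> s < length (rev Q) - 1"
    then have "rev Q ! s = Q ! (length Q - 1 - s)" by (simp add: rev_nth less_diff_conv)
    moreover have "0 < length Q - 1 - s \<and> length Q - 1 - s < length Q - 1" using s by auto
    ultimately have "rev Q ! s \<notin> range c" using Q unfolding short_chord_def interior_off_def by simp
    then show "rev Q ! s \<notin> range (\<lambda>k. c (i + a + k))" by auto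
  qed
  moreover have "c (i + a + (n - a)) = c i" using int_circuit_add_period[OF c, of i] by simp
  moreover have "walk E (rev Q)" using walk_rev[of E Q] edge_sym Q unfolding short_chord_def by blast
  ultimately show ?thesis
    using Q ne unfolding short_chord_def by (simp add: hd_rev last_rev)
qed

lemma short_chord_avoids_arc:
  assumes c: "int_circuit c n" and Q: "short_chord c n Q i a"
  shows "set (arc c i (nat a)) \<inter> set (tl Q) = {}"
proof (rule ccontr)
  have Ql: "last Q = c (i + a)" and off: "interior_off c Q" and l1: "int (length Q) - 1 < a"
    and l2: "int (length Q) - 1 < n - a"
    using Q unfolding short_chord_def by auto
  have lenQ: "2 \<le> length Q" using short_chord_length[OF c Q] .
  assume "set (arc c i (nat a)) \<inter> set (tl Q) \<noteq> {}"
  then obtain k j where k: "k < nat a" "tl Q ! j = c (i + int k)" and j: "j < length Q - 1"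
    unfolding arc_set by (auto simp: in_set_conv_nth)
  show False
  proof (cases "Suc j < length Q - 1")
    case True
    then have "Q ! Suc j \<notin> range c" using off unfolding interior_off_def by simp
    then show False using k j lenQ by (simp add: nth_tl)
  next
    case False
    then have "Suc j = length Q - 1" "Q \<noteq> []" using j lenQ by auto
    then have "c (i + int k) = c (i + a)" using Ql j k by (simp add: last_conv_nth nth_tl)
    moreover have "c (i + int k) \<noteq> c (i + a)"
      by (rule int_circuit_neq[OF c]) (use k l1 l2 lenQ in linarith)+
    ultimately show False by blast
  qed
qed

lemma short_chord_arc_circuit:
  assumes c: "int_circuit c n" and Q: "short_chord c n Q i a"
  defines "ys \<equiv> arc c i (nat a) @ rev (tl Q)"
  shows "list_circuit ys" "int (length ys) < n" "\<And>s. 0 \<le> s \<Longrightarrow> s \<le> a \<Longrightarrow> c (i + s) \<in> set ys"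
proof -
  have Qw: "walk E Q" and Qd: "distinct Q" and Qh: "hd Q = c i" and Ql: "last Q = c (i + a)"
    and l1: "int (length Q) - 1 < a" and l2: "int (length Q) - 1 < n - a"
    using Q unfolding short_chord_def by auto
  have lenQ: "2 \<le> length Q" using short_chord_length[OF c Q] .
  then obtain Q' where Qx: "Q = c i # Q'" and Q'ne: "Q' \<noteq> []"
    using Qh by (cases Q) (auto simp: Suc_le_eq)
  have a: "int (nat a) = a" "2 \<le> a" using l1 lenQ by auto
  have "walk E ([c (i + a - 1)] @ rev Q)"
    using walk_rev[of E Q] edge_sym Qw int_circuit_edge_from_pred[OF c, of "i + a"] Ql lenQ
    by (subst walk_append) (auto simp: hd_rev)
  then have "walk E (c (i + a - 1) # rev (tl Q) @ [c i])" using Qx by simp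
  then show "list_circuit ys"
    unfolding ys_def using short_chord_avoids_arc[OF c Q] Qd Qx a l2 lenQ
    by (intro arc_list_circuit[OF c]) auto
  show "int (length ys) < n" unfolding ys_def using l2 Qx a by simp
  fix s assume s: "0 \<le> s" "s \<le> a"
  show "c (i + s) \<in> set ys"
  proof (cases "s < a")
    case True
    then show ?thesis using arc_mem[of "nat s" "nat a" c i] s unfolding ys_def by simp
  next
    case False
    then show ?thesis using s Ql Qx Q'ne last_in_set[OF Q'ne] unfolding ys_def by simp
  qed
qed

lemma short_chord_arc_narrow:
  assumes c: "int_circuit c n" and narrow: "narrow_below n" and Q: "short_chord c n Q i a"
    and t: "0 \<le> t" "t \<le> a" "0 \<le> t'" "t' \<le> a"
  shows "\<delta> (c (i + t)) (c (i + t')) \<le> 2"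
  using narrow_belowD[OF narrow short_chord_arc_circuit(1,2)[OF c Q]] short_chord_arc_circuit(3)[OF c Q] t
  by blast

lemma short_chord_coarc_narrow:
  assumes c: "int_circuit c n" and narrow: "narrow_below n" and Q: "short_chord c n Q i a"
    and t: "a \<le> t" "t \<le> n" "a \<le> t'" "t' \<le> n"
  shows "\<delta> (c (i + t)) (c (i + t')) \<le> 2"
  using short_chord_arc_narrow[OF int_circuit_shift[OF c] narrow short_chord_reverse[OF c Q], of "t - a" "t' - a"] t
  by simp

definition central :: "(int \<Rightarrow> 'a) \<Rightarrow> 'a \<Rightarrow> bool" where
  "central c x \<longleftrightarrow> (\<forall>k. \<delta> x (c k) \<le> 2)"

lemma short_chord_ends_central:
  assumes c: "int_circuit c n" and narrow: "narrow_below n" and Q: "short_chord c n Q i a"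
  shows "central c (c i)" "central c (c (i + a))"
proof -
  have a: "0 < a" "a < n" using short_chord_length[OF c Q] Q unfolding short_chord_def by auto
  have "\<delta> (c i) (c k) \<le> 2 \<and> \<delta> (c (i + a)) (c k) \<le> 2" for k
  proof -
    define t where "t = (k - i) mod n"
    have t: "0 \<le> t" "t < n" "c (i + t) = c k"
      using int_circuit_eq_iff[OF c] a unfolding t_def by (auto simp: mod_add_right_eq)
    have "c (i + 0) = c i" "c (i + n) = c i" using int_circuit_add_period[OF c] by auto
    then show ?thesis
      using short_chord_arc_narrow[OF c narrow Q, of 0 t] short_chord_arc_narrow[OF c narrow Q, of a t]
        short_chord_coarc_narrow[OF c narrow Q, of n t] short_chord_coarc_narrow[OF c narrow Q, of a t]
        t a by (cases "t \<le> a") auto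
  qed
  then show "central c (c i)" "central c (c (i + a))" unfolding central_def by auto
qed

lemma geodesic_along_arc:
  assumes c: "int_circuit c n" and g: "geodesic g (c p) (c (p + a))" and off: "interior_off c g"
    and a: "0 < a" "int (length g) - 1 = a"
  shows "a = 1"
proof (rule ccontr)
  assume "a \<noteq> 1"
  let ?arc = "arc c p (nat a + 1)"
  have "geodesic ?arc (c p) (c (p + a))"
    using arc_walk[OF c, of "nat a + 1" p] g a unfolding geodesic_def by (simp add: arc_hd arc_last)
  then have "g = ?arc" using geodesic_unique[OF int_circuit_in_V[OF c] int_circuit_in_V[OF c] g] by blast
  moreover have "1 < length g - 1" using a \<open>a \<noteq> 1\<close> by linarith
  moreover have "?arc ! 1 = c (p + 1)" using a by simp
  ultimately show False using off unfolding interior_off_def by (metis rangeI zero_less_one)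
qed

lemma geodesic_along_coarc:
  assumes c: "int_circuit c n" and g: "geodesic g (c p) (c (p + a))" and off: "interior_off c g"
    and a: "a < n" "int (length g) - 1 = n - a"
  shows "a = n - 1"
proof -
  have "geodesic g (c (p - 0)) (c (p - (0 + (n - a))))"
    using g int_circuit_diff_period[OF c, of "p + a"] by (simp add: algebra_simps)
  moreover have "interior_off (\<lambda>k. c (p - k)) g"
    using off unfolding interior_off_def by auto
  ultimately show ?thesis
    using geodesic_along_arc[OF int_circuit_reflect[OF c, of p], of g 0 "n - a"] a by simp
qed

text \<open>Key dichotomy: the two arcs of the circuit together with a shorter chord form two shorter
  circuits, each containing both ends of the chord.\<close>
lemma off_circuit_geodesic:
  assumes c: "int_circuit c n" and narrow: "narrow_below n" and g: "geodesic g (c p) (c q)"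
    and neq: "c p \<noteq> c q" and off: "interior_off c g"
  shows "(length g = 2 \<and> (c p = c (q - 1) \<or> c p = c (q + 1))) \<or> (central c (c p) \<and> central c (c q))"
proof -
  define a where "a = (q - p) mod n"
  have n: "3 \<le> n" using int_circuit_ge_3[OF c] .
  have cq: "c (p + a) = c q" using int_circuit_eq_iff[OF c] unfolding a_def by (simp add: mod_add_right_eq)
  then have shift: "c (p + a + d) = c (q + d)" for d
    using int_circuit_eq_iff_dvd[OF c, of "p + a + d" "q + d"] int_circuit_eq_iff_dvd[OF c, of "p + a" q] by simp
  have "a \<noteq> 0" using cq neq by auto
  moreover have "0 \<le> a" "a < n" using n unfolding a_def by simp_all
  ultimately have a: "0 < a" "a < n" by simp_all
  have ga: "geodesic g (c p) (c (p + a))" using g cq by simp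
  have len: "int (length g) - 1 = int (\<delta> (c p) (c (p + a)))" using ga unfolding geodesic_def by simp
  consider "int (length g) - 1 < a" "int (length g) - 1 < n - a" | "int (length g) - 1 = a"
    | "int (length g) - 1 = n - a"
    using len gdist_arc_le[OF c, of a p] gdist_coarc_le[OF c, of a p] a by linarith
  then show ?thesis
  proof cases
    case 1
    then have "short_chord c n g p a"
      using ga off geodesic_distinct[OF g int_circuit_in_V[OF c]] unfolding short_chord_def geodesic_def by simp
    then show ?thesis using short_chord_ends_central[OF c narrow] cq by metis
  next
    case 2
    then have "a = 1" using geodesic_along_arc[OF c ga off a(1)] by simp
    then show ?thesis using 2 shift[of "-1"] by simp
  next
    case 3
    then have "a = n - 1" using geodesic_along_coarc[OF c ga off a(2)] by simp
    then show ?thesis using 3 shift[of 1] int_circuit_add_period[OF c, of p] by simp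
  qed
qed

lemma interior_off_suffix_exists:
  assumes "hd g \<in> range c" "2 \<le> length g"
  shows "\<exists>t < length g - 1. g ! t \<in> range c \<and> interior_off c (drop t g)"
proof -
  define T where "T = {t. t < length g - 1 \<and> g ! t \<in> range c}"
  have "g \<noteq> []" using assms(2) by auto
  then have "0 \<in> T" using assms unfolding T_def by (simp add: hd_conv_nth)
  moreover have "finite T" unfolding T_def by simp
  ultimately have t0: "Max T \<in> T" and max: "\<And>t. t \<in> T \<Longrightarrow> t \<le> Max T"
    using Max_in Max_ge by blast+
  have "interior_off c (drop (Max T) g)"
    unfolding interior_off_def
  proof (intro allI impI notI)
    fix u assume "0 < u \<and> u < length (drop (Max T) g) - 1" "drop (Max T) g ! u \<in> range c"
    then have "Max T + u \<in> T" using t0 unfolding T_def by auto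
    then show False using max \<open>0 < u \<and> _\<close> by fastforce
  qed
  then show ?thesis using t0 unfolding T_def by blast
qed

lemma predecessor_on_circuit:
  assumes c: "int_circuit c n" and narrow: "narrow_below n" and far: "\<not> central c (c q)"
    and neq: "c p \<noteq> c q" and e: "E w (c q)" and l: "\<delta> (c p) w + 1 = \<delta> (c p) (c q)"
  shows "w = c (q - 1) \<or> w = c (q + 1)"
proof -
  have V: "c p \<in> V" "c q \<in> V" "w \<in> V" using int_circuit_in_V[OF c] e edge_in_V by auto
  obtain g0 where g0: "geodesic g0 (c p) w" using geodesic_exists V by blast
  define g where "g = g0 @ [c q]"
  have g: "geodesic g (c p) (c q)" unfolding g_def using geodesic_snoc[OF g0 e l] .
  have len: "length g = Suc (length g0)" "0 < length g0"
    using g0 unfolding g_def geodesic_def by auto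
  then have "hd g \<in> range c" "2 \<le> length g" using g unfolding geodesic_def by (auto simp: Suc_le_eq)
  then obtain t p' where t: "t < length g - 1" "g ! t = c p'" and off: "interior_off c (drop t g)"
    using interior_off_suffix_exists by blast
  have s: "geodesic (drop t g) (c p') (c q)" using geodesic_drop[OF g V(1), of t] t by simp
  have "g ! (length g - 1) = c q"
    using g last_conv_nth[OF geodesic_not_Nil[OF g]] unfolding geodesic_def by metis
  then have "c p' \<noteq> c q"
    using t nth_eq_iff_index_eq[OF geodesic_distinct[OF g V(1)], of t "length g - 1"] by auto
  with off_circuit_geodesic[OF c narrow s _ off] far
  have "length (drop t g) = 2" and p': "c p' = c (q - 1) \<or> c p' = c (q + 1)" by auto
  then have "t = length g0 - 1" using len by simp
  then have "g ! t = last g0" using len unfolding g_def by (simp add: nth_append last_conv_nth)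
  then show ?thesis using p' t g0 unfolding geodesic_def by auto
qed

lemma cyclic_dist_triangle:
  fixes a b n :: int
  assumes "0 < a" "a < n" "0 < b" "b < n" "a \<noteq> b"
  shows "min a (n - a) \<le> min b (n - b) + min ((a - b) mod n) (n - (a - b) mod n)"
proof (cases "b < a")
  case True
  then have "(a - b) mod n = a - b" using assms by simp
  then show ?thesis using True assms unfolding min_def by simp
next
  case False
  have "(a - b) mod n = (a - b + n) mod n" by simp
  also have "\<dots> = a - b + n" using assms False by (intro mod_pos_pos_trivial) auto
  finally have "(a - b) mod n = a - b + n" .
  then show ?thesis using False assms unfolding min_def by simp
qed

definition int_circuit_isometric :: "(int \<Rightarrow> 'a) \<Rightarrow> int \<Rightarrow> bool" where
  "int_circuit_isometric c n \<longleftrightarrow> (\<forall>i a. 0 < a \<and> a < n \<longrightarrow> int (\<delta> (c i) (c (i + a))) = min a (n - a))"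

lemma isometric_circuit_of_int_circuit:
  assumes c: "int_circuit c n" and iso: "int_circuit_isometric c n"
  shows "isometric_circuit E (\<lambda>i. c (int i)) (nat n)"
  unfolding isometric_circuit_def embedded_circuit_def
proof (intro conjI allI impI)
  have n: "3 \<le> n" using int_circuit_ge_3[OF c] .
  show "E (c (int i)) (c (int (Suc i)))" for i
    using int_circuit_edge[OF c, of "int i"] by (simp add: add.commute)
  show "inj_on (\<lambda>i. c (int i)) {..<nat n}"
    using int_circuit_eq_iff[OF c] n by (intro inj_onI) auto
  show "c (int (nat n)) = c (int 0)" using int_circuit_add_period[OF c, of 0] n by simp
  fix i j assume ij: "i < j \<and> j < nat n"
  define a where "a = int j - int i"
  have "0 < a" "a < n" using ij n unfolding a_def by auto
  then have "int (\<delta> (c (int i)) (c (int i + a))) = min a (n - a)"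
    using iso unfolding int_circuit_isometric_def by blast
  moreover have "int i + a = int j" "int (min (j - i) (nat n + i - j)) = min a (n - a)"
    using ij n unfolding a_def by (auto simp: min_def)
  ultimately show "\<delta> (c (int i)) (c (int j)) = min (j - i) (nat n + i - j)" by simp
qed

text \<open>A shortcut between circuit vertices realizing the least possible distance leaves the
  circuit at once: a circuit vertex inside it would split it into two shortcuts of smaller distance.\<close>
lemma least_shortcut_interior_off:
  assumes c: "int_circuit c n" and g: "geodesic g (c i) (c (i + a))" and a: "0 < a" "a < n"
    and short: "int (\<delta> (c i) (c (i + a))) < min a (n - a)"
    and least: "\<And>j b. 0 < b \<Longrightarrow> b < n \<Longrightarrow> \<delta> (c j) (c (j + b)) < \<delta> (c i) (c (i + a)) \<Longrightarrow>
      min b (n - b) \<le> int (\<delta> (c j) (c (j + b)))"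
  shows "interior_off c g"
  unfolding interior_off_def
proof (intro allI impI notI)
  fix t assume t: "0 < t \<and> t < length g - 1" and "g ! t \<in> range c"
  then obtain k where k: "g ! t = c k" by auto
  define D where "D = \<delta> (c i) (c (i + a))"
  have V: "c i \<in> V" using int_circuit_in_V[OF c] .
  have lenG: "length g = Suc D" using g unfolding geodesic_def D_def by simp
  have ends: "g ! 0 = c i" "g ! D = c (i + a)"
    using g geodesic_not_Nil[OF g] lenG unfolding geodesic_def by (auto simp: hd_conv_nth last_conv_nth)
  define b where "b = (k - i) mod n"
  define b' where "b' = (a - b) mod n"
  have cb: "c (i + b) = c k" "c (i + b + b') = c (i + a)"
    using int_circuit_eq_iff[OF c] unfolding b_def b'_def by (simp_all add: mod_add_right_eq)
  have d1: "\<delta> (c i) (c (i + b)) = t" and d2: "\<delta> (c (i + b)) (c (i + b + b')) = D - t"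
    using geodesic_gdist_nth[OF g V, of 0 t] geodesic_gdist_nth[OF g V, of t D] t lenG ends k cb by simp_all
  have "b \<noteq> 0" "b' \<noteq> 0" using d1 d2 t lenG by auto
  moreover have "0 \<le> b" "b < n" "0 \<le> b'" "b' < n" using a unfolding b_def b'_def by simp_all
  moreover have "a \<noteq> b" using \<open>b' \<noteq> 0\<close> unfolding b'_def by auto
  ultimately have b: "0 < b" "b < n" "0 < b'" "b' < n" "a \<noteq> b" by simp_all
  have "min b (n - b) \<le> int t" "min b' (n - b') \<le> int (D - t)"
    using least[of b i] least[of b' "i + b"] d1 d2 b t lenG unfolding D_def by auto
  moreover have "min a (n - a) \<le> min b (n - b) + min b' (n - b')"
    unfolding b'_def using cyclic_dist_triangle a b by blast
  ultimately show False using short t lenG unfolding D_def by linarith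
qed

lemma least_shortcut_exists:
  assumes c: "int_circuit c n" and "\<not> int_circuit_isometric c n"
  shows "\<exists>i a. 0 < a \<and> a < n \<and> int (\<delta> (c i) (c (i + a))) < min a (n - a) \<and>
    (\<forall>j b. 0 < b \<longrightarrow> b < n \<longrightarrow> \<delta> (c j) (c (j + b)) < \<delta> (c i) (c (i + a)) \<longrightarrow>
      min b (n - b) \<le> int (\<delta> (c j) (c (j + b))))"
proof -
  define shortcut where "shortcut D \<longleftrightarrow>
    (\<exists>i a. 0 < a \<and> a < n \<and> \<delta> (c i) (c (i + a)) = D \<and> int D < min a (n - a))" for D
  from assms(2) obtain i a where "0 < a" "a < n" "int (\<delta> (c i) (c (i + a))) \<noteq> min a (n - a)"
    unfolding int_circuit_isometric_def by blast
  moreover have "int (\<delta> (c i) (c (i + a))) \<le> a" "int (\<delta> (c i) (c (i + a))) \<le> n - a"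
    using gdist_arc_le[OF c] gdist_coarc_le[OF c] \<open>0 < a\<close> \<open>a < n\<close> by auto
  ultimately have "shortcut (\<delta> (c i) (c (i + a)))"
    unfolding shortcut_def by (intro exI[of _ i] exI[of _ a]) (auto simp: min_def)
  then have "shortcut (Least shortcut)" by (rule LeastI)
  then obtain i a where "0 < a" "a < n" "\<delta> (c i) (c (i + a)) = Least shortcut"
    "int (\<delta> (c i) (c (i + a))) < min a (n - a)"
    unfolding shortcut_def by auto
  moreover from this(3) have "min b (n - b) \<le> int (\<delta> (c j) (c (j + b)))"
    if "0 < b" "b < n" "\<delta> (c j) (c (j + b)) < \<delta> (c i) (c (i + a))" for j b
    using that not_less_Least[of "\<delta> (c j) (c (j + b))" shortcut] unfolding shortcut_def by force
  ultimately show ?thesis by blast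
qed

lemma isometric_or_two_central:
  assumes c: "int_circuit c n" and narrow: "narrow_below n"
  shows "int_circuit_isometric c n \<or> (\<exists>p q. c p \<noteq> c q \<and> central c (c p) \<and> central c (c q))"
proof (cases "int_circuit_isometric c n")
  case False
  then obtain i a where a: "0 < a" "a < n" and short: "int (\<delta> (c i) (c (i + a))) < min a (n - a)"
    and least: "\<And>j b. 0 < b \<Longrightarrow> b < n \<Longrightarrow> \<delta> (c j) (c (j + b)) < \<delta> (c i) (c (i + a)) \<Longrightarrow>
      min b (n - b) \<le> int (\<delta> (c j) (c (j + b)))"
    using least_shortcut_exists[OF c] by blast
  have neq: "c i \<noteq> c (i + a)" by (rule int_circuit_neq[OF c]) (use a in simp_all)
  obtain g where g: "geodesic g (c i) (c (i + a))"
    using geodesic_exists int_circuit_in_V[OF c] by blast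
  have "interior_off c g"
    using least_shortcut_interior_off[OF c g a short least] .
  with off_circuit_geodesic[OF c narrow g neq]
  consider (edge) "length g = 2" "c i = c (i + a - 1) \<or> c i = c (i + a + 1)"
    | (central) "central c (c i)" "central c (c (i + a))"
    by blast
  then show ?thesis
  proof cases
    case edge
    then have "1 < a" "a + 1 < n" using short g unfolding geodesic_def by auto
    then show ?thesis
      using edge int_circuit_neq[OF c, of i "i + a - 1"] int_circuit_neq[OF c, of i "i + a + 1"] by auto
  next
    case central
    then show ?thesis using neq by blast
  qed
qed simp

section \<open>Circuits isometric from a vertex\<close>

definition isometric_from_0 :: "(int \<Rightarrow> 'a) \<Rightarrow> int \<Rightarrow> bool" where
  "isometric_from_0 f n \<longleftrightarrow> (\<forall>k. 0 \<le> k \<and> k < n \<longrightarrow> int (\<delta> (f 0) (f k)) = min k (n - k))"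

lemma isometric_from_0D: "isometric_from_0 f n \<Longrightarrow> 0 \<le> k \<Longrightarrow> k < n \<Longrightarrow> int (\<delta> (f 0) (f k)) = min k (n - k)"
  unfolding isometric_from_0_def by blast

lemma isometric_from_0_reflect:
  assumes f: "int_circuit f n" and iso: "isometric_from_0 f n"
  shows "isometric_from_0 (\<lambda>k. f (- k)) n"
  unfolding isometric_from_0_def
proof (intro allI impI)
  fix k assume k: "0 \<le> k \<and> k < n"
  show "int (\<delta> (f (- 0)) (f (- k))) = min k (n - k)"
  proof (cases "k = 0")
    case False
    then have "int (\<delta> (f 0) (f (n - k))) = min (n - k) (n - (n - k))" using iso k by (simp add: isometric_from_0D)
    moreover have "f (- k) = f (n - k)" using int_circuit_add_period[OF f, of "- k"] by simp
    ultimately show ?thesis by (simp add: min.commute)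
  qed (use int_circuit_ge_3[OF f] in simp)
qed

text \<open>If \<open>f k\<close> and \<open>f j\<close> were within distance 2, the level of \<open>f j\<close> would force \<open>f k\<close> onto the unique
  geodesic from \<open>f 0\<close> to \<open>f j\<close>, which runs along the other side of the circuit.\<close>
lemma isometric_from_0_far:
  assumes f: "int_circuit f n" and iso: "isometric_from_0 f n" and n: "n = 2 * L + 1"
    and k: "1 \<le> k" "k \<le> L" and j: "L + 1 \<le> j" "j \<le> n - 1" and kj: "2 \<le> n - j - k"
  shows "3 \<le> \<delta> (f k) (f j)"
proof (rule ccontr)
  assume "\<not> 3 \<le> \<delta> (f k) (f j)"
  have V: "f 0 \<in> V" "f k \<in> V" "f j \<in> V" using int_circuit_in_V[OF f] by auto
  have lk: "int (\<delta> (f 0) (f k)) = k" and lj: "int (\<delta> (f 0) (f j)) = n - j"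
    using isometric_from_0D[OF iso] k j n by auto
  then have sum: "\<delta> (f 0) (f k) + \<delta> (f k) (f j) = \<delta> (f 0) (f j)"
    using gdist_triangle[OF V] \<open>\<not> 3 \<le> \<delta> (f k) (f j)\<close> kj by linarith
  let ?g = "arc (\<lambda>t. f (- t)) 0 (nat (n - j) + 1)"
  have "walk E ?g" using arc_walk[OF int_circuit_reflect[OF f, of 0]] by simp
  moreover have "last ?g = f j" using j int_circuit_diff_period[OF f, of j] by (simp add: arc_last)
  ultimately have "geodesic ?g (f 0) (f j)"
    using lj j unfolding geodesic_def by (simp add: arc_hd)
  then have "?g ! \<delta> (f 0) (f k) = f k" using geodesic_nth_between[OF V sum] by blast
  moreover have "\<delta> (f 0) (f k) < nat (n - j) + 1" using lk lj sum by linarith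
  then have "?g ! \<delta> (f 0) (f k) = f (- k)" using lk by simp
  moreover have "f (- k) \<noteq> f k" by (rule int_circuit_neq[OF f]) (use k n in auto)
  ultimately show False by simp
qed

lemma isometric_from_0_not_central:
  assumes f: "int_circuit f n" and iso: "isometric_from_0 f n" and n: "n = 2 * L + 1"
    and k: "1 \<le> k" "k + 2 \<le> L"
  shows "\<not> central f (f k)" "\<not> central f (f (n - k))"
proof -
  have f': "int_circuit (\<lambda>k. f (- k)) n" using int_circuit_reflect[OF f, of 0] by simp
  have "3 \<le> \<delta> (f k) (f (n - k - 2))"
    using isometric_from_0_far[OF f iso n, of k "n - k - 2"] k n by simp
  then have "\<not> \<delta> (f k) (f (n - k - 2)) \<le> 2" by simp
  then show "\<not> central f (f k)" unfolding central_def by blast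
  have "3 \<le> \<delta> (f (- k)) (f (- (n - k - 2)))"
    using isometric_from_0_far[OF f' isometric_from_0_reflect[OF f iso] n, of k "n - k - 2"] k n by simp
  moreover have "f (- k) = f (n - k)" using int_circuit_add_period[OF f, of "- k"] by simp
  ultimately have "\<not> \<delta> (f (n - k)) (f (- (n - k - 2))) \<le> 2" by simp
  then show "\<not> central f (f (n - k))" unfolding central_def by blast
qed

lemma isometric_from_0_central_position:
  assumes f: "int_circuit f n" and iso: "isometric_from_0 f n" and n: "n = 2 * L + 1" and L: "3 \<le> L"
    and central: "central f (f k)" and k: "0 \<le> k" "k < n"
  shows "L = 3 \<and> (k = 2 \<or> k = 5)"
proof -
  have V: "\<And>i. f i \<in> V" using int_circuit_in_V[OF f] by auto
  have "\<delta> (f 0) (f k) \<le> 2" "\<delta> (f k) (f 3) \<le> 2"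
    using central gdist_sym[OF V V] unfolding central_def by metis+
  then have "k \<noteq> 0" "\<not> (3 \<le> k \<and> k \<le> n - 3)"
    using isometric_from_0D[OF iso, of 3] isometric_from_0D[OF iso, of k] n L by auto
  moreover have "k \<noteq> 1" "k \<noteq> n - 1"
    using isometric_from_0_not_central[OF f iso n, of 1] central L by auto
  moreover have "L = 3"
  proof (rule ccontr)
    assume "L \<noteq> 3"
    moreover have "k = 2 \<or> k = n - 2"
      using k \<open>k \<noteq> 0\<close> \<open>k \<noteq> 1\<close> \<open>k \<noteq> n - 1\<close> \<open>\<not> (3 \<le> k \<and> k \<le> n - 3)\<close> by linarith
    ultimately show False using isometric_from_0_not_central[OF f iso n, of 2] central L by auto
  qed
  ultimately show ?thesis using k n by auto
qed

lemma isometric_from_0_7_levels: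
  assumes "isometric_from_0 f 7"
  shows "\<delta> (f 0) (f 1) = 1" "\<delta> (f 0) (f 2) = 2" "\<delta> (f 0) (f 3) = 3" "\<delta> (f 0) (f 4) = 3"
    "\<delta> (f 0) (f 5) = 2" "\<delta> (f 0) (f 6) = 1"
  using isometric_from_0D[OF assms, of 1] isometric_from_0D[OF assms, of 2] isometric_from_0D[OF assms, of 3]
    isometric_from_0D[OF assms, of 4] isometric_from_0D[OF assms, of 5] isometric_from_0D[OF assms, of 6]
  by simp_all

lemma isometric_from_0_7_midpoint:
  assumes f: "int_circuit f 7" and iso: "isometric_from_0 f 7" and w: "E (f 1) w" "E w (f 5)"
  shows "\<exists>xs. list_circuit xs \<and> length xs = 6 \<and> f 1 \<in> set xs \<and> f 4 \<in> set xs"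
proof -
  have V: "\<And>i. f i \<in> V" using int_circuit_in_V[OF f] by auto
  have E: "\<And>i. E (f i) (f (i + 1))" "\<And>i. E (f (i + 1)) (f i)"
    using int_circuit_edge[OF f] int_circuit_edge_sym[OF f] by blast+
  have neq: "\<And>i j. i < j \<Longrightarrow> j < i + 7 \<Longrightarrow> f i \<noteq> f j" using int_circuit_neq[OF f] by blast
  note l = isometric_from_0_7_levels[OF iso]
  have "\<delta> (f 0) w \<le> 2" "1 \<le> \<delta> (f 0) w"
    using gdist_edge_step[OF V[of 0] w(1)] gdist_edge_step[OF V[of 0] w(2)] l by simp_all
  then consider "\<delta> (f 0) w = 1" | "\<delta> (f 0) w = 2" "w \<noteq> f 2" | "w = f 2" by linarith
  then show ?thesis
  proof cases
    case 1
    then have "w = f 6" using predecessor_unique[OF V[of 0] w(2) E(2)[of 5]] l by simp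
    then have "list_circuit (arc f 1 6 @ [])"
      using w by (intro arc_list_circuit[OF f]) (auto simp: edge_sym)
    then show ?thesis using arc_mem[of 0 6 f 1] arc_mem[of 3 6 f 1] by fastforce
  next
    case 2
    have "w \<notin> set (arc f 1 5)"
    proof
      assume "w \<in> set (arc f 1 5)"
      then obtain k :: nat where "k < 5" "w = f (1 + int k)" unfolding arc_set by blast
      then show False using w 2 l edge_irrefl by (auto simp: less_Suc_eq numeral_eq_Suc)
    qed
    then have "list_circuit (arc f 1 5 @ [w])"
      using w by (intro arc_list_circuit[OF f]) (auto simp: edge_sym)
    then show ?thesis using arc_mem[of 0 5 f 1] arc_mem[of 3 5 f 1] by fastforce
  next
    case 3
    have "\<not> E (f 2) (f 4)"
      using predecessor_unique[OF V[of 0], of "f 2" "f 4" "f 5"] E(2)[of 4] l neq[of 2 5] by auto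
    then have "\<delta> (f 2) (f 4) = 2" using gdist_eq_2[OF E(1)[of 2]] E(1)[of 3] neq[of 2 4] by simp
    then show ?thesis using midpoint_unique[of "f 2" "f 3" "f 4" "f 5"] E(1)[of 2] E(1)[of 3] E(2)[of 4] w 3
      neq[of 3 5] by simp
  qed
qed

lemma isometric_from_0_7:
  assumes f: "int_circuit f 7" and narrow: "narrow_below 7" and iso: "isometric_from_0 f 7"
  shows "3 \<le> \<delta> (f 1) (f 5)"
proof (rule ccontr)
  assume "\<not> 3 \<le> \<delta> (f 1) (f 5)"
  have V: "\<And>i. f i \<in> V" using int_circuit_in_V[OF f] by auto
  have "\<not> E (f 1) (f 5)"
    using predecessor_unique[OF V[of 0], of "f 1" "f 5" "f 6"] int_circuit_edge_sym[OF f, of 5]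
      isometric_from_0_7_levels[OF iso] int_circuit_neq[OF f, of 1 6]
    by auto
  then have "\<delta> (f 1) (f 5) \<noteq> 1" using gdist_eq_1_imp_edge[OF V V] by blast
  moreover have "\<delta> (f 1) (f 5) \<noteq> 0" using gdist_eq_0_imp_eq[OF V V] int_circuit_neq[OF f, of 1 5] by auto
  ultimately have "\<delta> (f 1) (f 5) = 2" using \<open>\<not> 3 \<le> \<delta> (f 1) (f 5)\<close> by linarith
  then obtain w where "E (f 1) w" "E w (f 5)" using midpoint_exists[OF V V] by blast
  then obtain xs where "list_circuit xs" "length xs = 6" "f 1 \<in> set xs" "f 4 \<in> set xs"
    using isometric_from_0_7_midpoint[OF f iso] by blast
  then have "\<delta> (f 1) (f 4) \<le> 2" using narrow_belowD[OF narrow] by simp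
  then show False using isometric_from_0_far[OF f iso, of 3 1 4] by simp
qed

section \<open>Levels and pentagons\<close>

lemma far_vertex_predecessor:
  assumes c: "int_circuit c n" and narrow: "narrow_below n" and far: "3 \<le> \<delta> (c 0) (c k)"
  shows "\<delta> (c 0) (c (k - 1)) + 1 = \<delta> (c 0) (c k) \<or> \<delta> (c 0) (c (k + 1)) + 1 = \<delta> (c 0) (c k)"
proof -
  have V: "\<And>i. c i \<in> V" using int_circuit_in_V[OF c] by auto
  have ne: "c k \<noteq> c 0" using far by auto
  obtain w where w: "E w (c k)" "\<delta> (c 0) w + 1 = \<delta> (c 0) (c k)"
    using predecessor_exists[OF V V ne] by blast
  have "\<not> \<delta> (c k) (c 0) \<le> 2" using far gdist_sym[OF V V, of k 0] by simp
  then have "\<not> central c (c k)" unfolding central_def by blast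
  then have "w = c (k - 1) \<or> w = c (k + 1)"
    using predecessor_on_circuit[OF c narrow _ ne[symmetric] w] by blast
  then show ?thesis using w(2) by auto
qed

text \<open>Seen from \<open>c 0\<close>, the circuit runs through \<open>c 1, \<dots>, c 5\<close> with levels \<open>1, 2, 3, 3, 2\<close>,
  and the chord from \<open>c 1\<close> to \<open>c 5\<close> closes these five vertices into a pentagon.\<close>
definition pentagon :: "(int \<Rightarrow> 'a) \<Rightarrow> bool" where
  "pentagon c \<longleftrightarrow> E (c 1) (c 5) \<and> \<delta> (c 0) (c 2) = 2 \<and> \<delta> (c 0) (c 3) = 3 \<and> \<delta> (c 0) (c 4) = 3 \<and>
     \<delta> (c 0) (c 5) = 2"

text \<open>If \<open>b\<close> were not 2 modulo \<open>n\<close>, the edge from \<open>f 1\<close> to \<open>f b\<close> would be a short chord, and the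
  shorter circuit it closes through \<open>f 0\<close> would put \<open>f (b + 1)\<close> within distance 2 of \<open>f 0\<close>.\<close>
lemma block_position:
  assumes f: "int_circuit f n" and narrow: "narrow_below n" and l1: "\<delta> (f 0) (f 1) = 1"
    and edges: "E (f 1) (f b)" "E (f 1) (f (b + 3))"
    and levels: "\<delta> (f 0) (f b) = 2" "\<delta> (f 0) (f (b + 1)) = 3" "\<delta> (f 0) (f (b + 2)) = 3"
      "\<delta> (f 0) (f (b + 3)) = 2"
  shows "f (b + j) = f (2 + j)"
proof -
  define b' where "b' = b mod n"
  have b': "0 \<le> b'" "b' < n" "f (b' + j) = f (b + j)" for j
    using int_circuit_ge_3[OF f] int_circuit_eq_iff[OF f] unfolding b'_def by (auto simp: mod_add_left_eq)
  have fn: "f n = f 0" using int_circuit_add_period[OF f, of 0] by simp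
  have "b' \<noteq> 0" "b' \<noteq> 1" using b'(3)[of 0] levels(1) l1 by auto
  moreover have "b' + 1 \<noteq> n" "b' + 2 \<noteq> n" "b' + 3 \<noteq> n" using b'(3) levels fn by (metis gdist_self zero_neq_numeral)+
  ultimately have range: "2 \<le> b'" "b' + 3 < n" using b' by auto
  have "b' = 2"
  proof (rule ccontr)
    assume "b' \<noteq> 2"
    have "short_chord f n [f 1, f b'] 1 (b' - 1)"
      unfolding short_chord_def interior_off_def
      using edges(1) b'(3)[of 0] edge_irrefl range \<open>b' \<noteq> 2\<close> by auto
    then have "\<delta> (f (1 + b')) (f (1 + (n - 1))) \<le> 2"
      using short_chord_coarc_narrow[OF f narrow, of "[f 1, f b']" 1 "b' - 1" b' "n - 1"] range by simp
    moreover have "\<delta> (f (b' + 1)) (f 0) = 3"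
      using levels(2) b'(3)[of 1] gdist_sym[OF int_circuit_in_V[OF f] int_circuit_in_V[OF f]] by metis
    ultimately show False using fn by (simp add: add.commute)
  qed
  then show ?thesis using b'(3)[of j] by simp
qed

lemma pentagon_circuit_length:
  assumes e: "int_circuit e n" and p: "pentagon e"
  shows "6 \<le> n"
proof (rule ccontr)
  assume "\<not> 6 \<le> n"
  then have "n = 3 \<or> n = 4 \<or> n = 5" using int_circuit_ge_3[OF e] by auto
  moreover have "e n = e 0" using int_circuit_add_period[OF e, of 0] by simp
  ultimately show False using p unfolding pentagon_def by auto
qed

lemma pentagon_far_from_pred:
  assumes e: "int_circuit e n" and p: "pentagon e"
  shows "3 \<le> \<delta> (e (-1)) (e 3)" "3 \<le> \<delta> (e (-1)) (e 4)"
proof -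
  have V: "\<And>i. e i \<in> V" using int_circuit_in_V[OF e] .
  have ne: "e (-1) \<noteq> e 1"
    by (rule int_circuit_neq[OF e]) (use pentagon_circuit_length[OF e p] in simp_all)
  have d: "\<delta> (e 0) (e (-1)) = 1" using gdist_edge[OF int_circuit_edge_pred[OF e, of 0]] by simp
  have far: "3 \<le> \<delta> (e (-1)) w" if g: "geodesic [e 0, e 1, x, w] (e 0) w" for x w
  proof (rule ccontr)
    assume "\<not> 3 \<le> \<delta> (e (-1)) w"
    moreover have "w \<in> V" "\<delta> (e 0) w = 3" using g walk_in_V[of "[e 0, e 1, x, w]"] V
      unfolding geodesic_def by auto
    ultimately have "\<delta> (e 0) (e (-1)) + \<delta> (e (-1)) w = \<delta> (e 0) w"
      using gdist_triangle[OF V V \<open>w \<in> V\<close>, of 0 "-1"] d by linarith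
    then have "e (-1) = e 1" using geodesic_nth_between[OF V[of 0] V[of "-1"] \<open>w \<in> V\<close> _ g] d by simp
    with ne show False by simp
  qed
  have edges: "E (e 0) (e 1)" "E (e 1) (e 2)" "E (e 2) (e 3)" "E (e 5) (e 4)"
    using int_circuit_edge[OF e, of 0] int_circuit_edge[OF e, of 1] int_circuit_edge[OF e, of 2]
      int_circuit_edge_sym[OF e, of 4] by simp_all
  show "3 \<le> \<delta> (e (-1)) (e 3)" using far[of "e 2" "e 3"] edges p unfolding pentagon_def geodesic_def by simp
  show "3 \<le> \<delta> (e (-1)) (e 4)" using far[of "e 5" "e 4"] edges p unfolding pentagon_def geodesic_def by simp
qed

text \<open>In a circuit of length 8, a second chord from \<open>e 2\<close> to \<open>e 6\<close> would give two vertices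
  two distinct midpoints.\<close>
lemma pentagon_no_octagon_chord:
  assumes e: "int_circuit e 8" and p: "pentagon e" and chord: "E (e 2) (e 6)"
  shows False
proof -
  have E: "E (e 0) (e 1)" "E (e 1) (e 2)" "E (e 5) (e 6)" "E (e 6) (e 7)" "E (e 7) (e 0)" "E (e 1) (e 5)"
    using int_circuit_edge[OF e, of 0] int_circuit_edge[OF e, of 1] int_circuit_edge[OF e, of 5]
      int_circuit_edge[OF e, of 6] int_circuit_edge[OF e, of 7] int_circuit_add_period[OF e, of 0] p
    unfolding pentagon_def by simp_all
  have neq: "e 1 \<noteq> e 6" "e 2 \<noteq> e 5" "e 1 \<noteq> e 7" "e 0 \<noteq> e 6"
    using int_circuit_neq[OF e] by simp_all
  show False
  proof (cases "E (e 1) (e 6)")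
    case True
    show False
    proof (cases "E (e 0) (e 6)")
      case True
      then show False using midpoint_unique[of "e 0" "e 6" "e 5" "e 1"] E p neq unfolding pentagon_def
        by (auto simp: edge_sym)
    next
      case False
      then have "\<delta> (e 0) (e 6) = 2" using gdist_eq_2[of "e 0" "e 7" "e 6"] E neq by (auto simp: edge_sym)
      then show False using midpoint_unique[of "e 0" "e 1" "e 6" "e 7"] E \<open>E (e 1) (e 6)\<close> neq
        by (auto simp: edge_sym)
    qed
  next
    case False
    then have "\<delta> (e 1) (e 6) = 2" using gdist_eq_2[OF E(2) chord] neq by simp
    then show False using midpoint_unique[of "e 1" "e 2" "e 6" "e 5"] E chord neq by simp
  qed
qed

end

section \<open>Graphs whose isometric circuits are short\<close>

locale short_isometric_circuits = geodetic_graph +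
  assumes isometric_circuit_le_5: "\<forall>u n. isometric_circuit E u n \<longrightarrow> n \<le> 5"
begin

lemma no_odd_isometric_from_0:
  assumes f: "int_circuit f n" and narrow: "narrow_below n" and iso: "isometric_from_0 f n"
    and n: "n = 2 * L + 1" and L: "3 \<le> L"
  shows False
  using isometric_or_two_central[OF f narrow]
proof
  assume "int_circuit_isometric f n"
  then have "nat n \<le> 5" using isometric_circuit_le_5 isometric_circuit_of_int_circuit[OF f] by blast
  then show False using n L by linarith
next
  assume "\<exists>p q. f p \<noteq> f q \<and> central f (f p) \<and> central f (f q)"
  then obtain p q where pq: "f (p mod n) \<noteq> f (q mod n)" "central f (f (p mod n))" "central f (f (q mod n))"
    using int_circuit_mod[OF f] by metis
  have "0 < n" using n L by simp
  then have "L = 3 \<and> (p mod n = 2 \<or> p mod n = 5)" "L = 3 \<and> (q mod n = 2 \<or> q mod n = 5)"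
    using isometric_from_0_central_position[OF f iso n L] pq(2,3) by auto
  then have "n = 7" "central f (f 5)" using pq n by auto
  then have "\<delta> (f 1) (f 5) \<le> 2"
    using gdist_sym[OF int_circuit_in_V[OF f] int_circuit_in_V[OF f]] unfolding central_def by metis
  then show False using isometric_from_0_7[of f] f narrow iso \<open>n = 7\<close> by simp
qed

end

locale circuit_top = short_isometric_circuits +
  fixes e :: "int \<Rightarrow> 'a" and n :: int and L :: nat and a :: int
  assumes circuit: "int_circuit e n" and narrow: "narrow_below n"
    and level_le: "\<And>k. \<delta> (e 0) (e k) \<le> L" and level_top: "\<delta> (e 0) (e a) = L" and L: "3 \<le> L"
    and level_pred_top: "\<delta> (e 0) (e (a - 1)) + 1 = L"
begin

abbreviation level :: "int \<Rightarrow> nat" where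
  "level k \<equiv> \<delta> (e 0) (e k)"

lemma in_V: "e i \<in> V"
  using int_circuit_in_V[OF circuit] .

lemma level_step: "level (k + 1) \<le> level k + 1" "level k \<le> level (k + 1) + 1"
  using gdist_edge_step[OF in_V int_circuit_edge[OF circuit]]
    gdist_edge_step[OF in_V int_circuit_edge_sym[OF circuit]] by blast+

lemma level_after_top: "level (a + 1) = L"
proof -
  have "level (a + 1) \<noteq> L - 1"
  proof
    assume "level (a + 1) = L - 1"
    then have "e (a - 1) = e (a + 1)"
      using predecessor_unique[OF in_V[of 0] int_circuit_edge_from_pred[OF circuit, of a]
          int_circuit_edge_sym[OF circuit, of a]] level_pred_top level_top L by simp
    moreover have "e (a - 1) \<noteq> e (a + 1)"
      by (rule int_circuit_neq[OF circuit]) (use int_circuit_ge_3[OF circuit] in simp_all)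
    ultimately show False by simp
  qed
  then show ?thesis using level_step(2)[of a] level_le[of "a + 1"] level_top by linarith
qed

lemma level_continues:
  assumes "3 \<le> level x" "d = 1 \<or> d = -1" "level x \<le> level (x - d)"
  shows "level (x + d) + 1 = level x"
  using far_vertex_predecessor[OF circuit narrow assms(1)] assms(2,3) by auto

lemma levels_descend:
  assumes "j \<le> L - 2"
  shows "level (a - int j) = L - j" "level (a + 1 + int j) = L - j"
proof -
  have "level (a - int j) = L - j \<and> level (a + 1 + int j) = L - j \<and>
    L - j \<le> level (a - int j + 1) \<and> L - j \<le> level (a + int j)"
    using assms
  proof (induction j)
    case 0
    then show ?case using level_top level_after_top by simp
  next
    case (Suc j)
    then have IH: "level (a - int j) = L - j" "level (a + 1 + int j) = L - j"
      "L - j \<le> level (a - int j + 1)" "L - j \<le> level (a + int j)" and "3 \<le> L - j" by auto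
    then have "level (a - int (Suc j)) + 1 = level (a - int j)"
      "level (a + 1 + int (Suc j)) + 1 = level (a + 1 + int j)"
      using level_continues[of "a - int j" "-1"] level_continues[of "a + 1 + int j" 1]
      by (simp_all add: algebra_simps)
    then show ?case using IH by (simp add: algebra_simps; linarith)
  qed
  then show "level (a - int j) = L - j" "level (a + 1 + int j) = L - j" by simp_all
qed

lemma window_level_ge_2:
  assumes "a - (int L - 2) \<le> x" "x \<le> a + int L - 1"
  shows "2 \<le> level x"
proof (cases "x \<le> a")
  case True
  then show ?thesis using levels_descend(1)[of "nat (a - x)"] assms L by simp
next
  case False
  then show ?thesis using levels_descend(2)[of "nat (x - a - 1)"] assms L by simp
qed

lemma window_level_pos:
  assumes "a - int L + 1 \<le> x" "x \<le> a + int L"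
  shows "0 < level x"
  using window_level_ge_2[of x] window_level_ge_2[of "x + 1"] window_level_ge_2[of "x - 1"]
    level_step[of x] level_step[of "x - 1"] assms L
  by (cases "x = a - int L + 1 \<or> x = a + int L") auto

lemma level_zero_outside_window:
  assumes "e y = e 0"
  shows "y < a - int L + 1 \<or> a + int L < y"
  using window_level_pos[of y] assms by force

text \<open>The root \<open>e 0\<close> lies outside the window of \<open>2 L\<close> consecutive circuit vertices around the top.\<close>
lemma circuit_long: "2 * int L + 1 \<le> n"
proof (rule ccontr)
  assume "\<not> 2 * int L + 1 \<le> n"
  define y where "y = (a - int L + 1) + (- (a - int L + 1)) mod n"
  have "0 < n" using int_circuit_ge_3[OF circuit] by simp
  then have "a - int L + 1 \<le> y" "y < a - int L + 1 + n" "y mod n = 0"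
    unfolding y_def by (simp_all add: mod_add_right_eq)
  then show False
    using level_zero_outside_window[of y] int_circuit_eq_iff[OF circuit, of y 0] \<open>\<not> _\<close> by simp
qed

lemma root_before_window:
  assumes n: "n = 2 * int L + 1"
  shows "e (a - int L) = e 0"
proof -
  define y where "y = (a - int L) + (- (a - int L)) mod n"
  have "0 < n" using n by simp
  then have "a - int L \<le> y" "y < a - int L + n" "e y = e 0"
    using int_circuit_eq_iff[OF circuit, of y 0] unfolding y_def by (simp_all add: mod_add_right_eq)
  then have "y = a - int L" using level_zero_outside_window[of y] n by auto
  then show ?thesis using \<open>e y = e 0\<close> by simp
qed

lemma level_after_window:
  assumes n: "n = 2 * int L + 1" and k: "0 \<le> k" "k < n"
  shows "int (level (a - int L + k)) = min k (n - k)"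
proof -
  have root: "e (a - int L) = e 0" "e (a + int L + 1) = e 0"
    using root_before_window[OF n] int_circuit_add_period[OF circuit, of "a - int L"] n
    by (simp_all add: algebra_simps)
  consider "k = 0" | "k = 1" | "2 \<le> k" "k \<le> int L" | "int L + 1 \<le> k" "k \<le> 2 * int L - 1" | "k = 2 * int L"
    using k n by linarith
  then show ?thesis
  proof cases
    case 1
    then show ?thesis using root n by simp
  next
    case 2
    then show ?thesis using window_level_pos[of "a - int L + 1"] level_step(1)[of "a - int L"] root n L
      by simp
  next
    case 3
    define j where "j = nat (int L - k)"
    have j: "int j = int L - k" using 3 unfolding j_def by simp
    then have "j \<le> L - 2" "j \<le> L" using 3 by linarith+
    then show ?thesis using levels_descend(1)[of j] j 3 n by (simp add: algebra_simps)
  next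
    case 4
    define j where "j = nat (k - int L - 1)"
    have j: "int j = k - int L - 1" using 4 unfolding j_def by simp
    then have "j \<le> L - 2" "j \<le> L" using 4 by linarith+
    then show ?thesis using levels_descend(2)[of j] j 4 n by (simp add: algebra_simps)
  next
    case 5
    then show ?thesis
      using window_level_pos[of "a + int L"] level_step(2)[of "a + int L"] root n L
      by (simp add: algebra_simps)
  qed
qed

lemma circuit_length_ne: "n \<noteq> 2 * int L + 1"
proof
  assume n: "n = 2 * int L + 1"
  define f where "f k = e (a - int L + k)" for k
  have f: "int_circuit f n" unfolding f_def by (rule int_circuit_shift[OF circuit])
  have "isometric_from_0 f n"
    unfolding isometric_from_0_def f_def using level_after_window[OF n] root_before_window[OF n] by simp
  then show False using no_odd_isometric_from_0[OF f narrow _ n] L by simp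
qed

definition window :: "'a list" where
  "window = arc e (a - (int L - 2)) (2 * L - 2)"

lemma window_level: "x \<in> set window \<Longrightarrow> 2 \<le> \<delta> (e 0) x"
  using window_level_ge_2 L unfolding window_def arc_set by auto

lemma top_in_window: "e a \<in> set window"
  using arc_mem[of "L - 2" "2 * L - 2" e "a - (int L - 2)"] L unfolding window_def by simp

lemma window_circuit:
  assumes "distinct ws" "\<And>x. x \<in> set ws \<Longrightarrow> \<delta> (e 0) x \<le> 1"
    and "walk E (e (a + int L - 1) # ws @ [e (a - (int L - 2))])"
  shows "list_circuit (window @ ws)"
proof -
  have "a - (int L - 2) + int (2 * L - 2) - 1 = a + int L - 1" using L by simp
  moreover have "set ws \<inter> set window = {}" using assms(2) window_level by fastforce
  ultimately show ?thesis
    unfolding window_def using assms(1,3) circuit_long L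
    by (intro arc_list_circuit[OF circuit]) (simp_all add: algebra_simps)
qed

lemma common_parent: "\<exists>g. E (e 0) g \<and> E g (e (a - (int L - 2))) \<and> E g (e (a + int L - 1))"
proof -
  have "level (a - (int L - 2)) = 2" "level (a + int L - 1) = 2"
    using levels_descend[of "L - 2"] L by (simp_all add: algebra_simps)
  moreover from this have "e (a - (int L - 2)) \<noteq> e 0" "e (a + int L - 1) \<noteq> e 0" by auto
  ultimately obtain g g' where g: "E g (e (a - (int L - 2)))" "\<delta> (e 0) g + 1 = 2"
    and g': "E g' (e (a + int L - 1))" "\<delta> (e 0) g' + 1 = 2"
    using predecessor_exists[OF in_V in_V] by metis
  then have E0: "E (e 0) g" "E (e 0) g'"
    using gdist_eq_1_imp_edge[OF in_V] edge_in_V by simp_all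
  have "g = g'"
  proof (rule ccontr)
    assume "g \<noteq> g'"
    then have "list_circuit (window @ [g', e 0, g])"
      using g g' E0 by (intro window_circuit) (auto simp: edge_sym)
    moreover have "int (length (window @ [g', e 0, g])) < n"
      using circuit_long circuit_length_ne L unfolding window_def by simp
    ultimately have "level a \<le> 2" using narrow_belowD[OF narrow] top_in_window by simp
    then show False using level_top L by simp
  qed
  then show ?thesis using g g' E0 by blast
qed

lemma top_level_eq_3: "L = 3"
proof -
  obtain g where g: "E (e 0) g" "E g (e (a - (int L - 2)))" "E g (e (a + int L - 1))"
    using common_parent by blast
  have "list_circuit (window @ [g])"
    using g gdist_edge[OF g(1)] by (intro window_circuit) (auto simp: edge_sym)
  moreover have "int (length (window @ [g])) < n" using circuit_long L unfolding window_def by simp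
  ultimately have "\<delta> g (e a) \<le> 2" using narrow_belowD[OF narrow] top_in_window by simp
  moreover have "g \<in> V" using edge_in_V[OF g(1)] by blast
  ultimately show ?thesis
    using gdist_triangle[OF in_V[of 0] _ in_V[of a], of g] gdist_edge[OF g(1)] level_top L by simp
qed

lemma top_pentagon: "\<exists>s. (s = 1 \<or> s = -1) \<and> pentagon (\<lambda>k. e (s * k)) \<and> (e a = e (3 * s) \<or> e a = e (4 * s))"
proof -
  have L3: "L = 3" by (rule top_level_eq_3)
  obtain g where g: "E (e 0) g" "E g (e (a - 1))" "E g (e (a + 2))"
    using common_parent L3 by (auto simp: algebra_simps)
  have gV: "g \<in> V" using g(1) edge_in_V by blast
  have lv: "level (a - 1) = 2" "level a = 3" "level (a + 1) = 3" "level (a + 2) = 2"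
    using levels_descend[of 0] levels_descend[of 1] L3 by (simp_all add: algebra_simps)
  have "\<delta> (e a) g \<le> 2"
    using gdist_le_walk[of E "[e a, e (a - 1), g]" "e a" g] int_circuit_edge_pred[OF circuit, of a] g(2)
    by (simp add: edge_sym)
  moreover have "\<delta> (e 0) (e a) \<le> \<delta> (e 0) g + \<delta> g (e a)" "\<delta> g (e a) = \<delta> (e a) g"
    using gdist_triangle[OF in_V gV in_V] gdist_sym[OF gV in_V] by blast+
  ultimately have "\<delta> (e a) g + 1 = \<delta> (e a) (e 0)"
    using lv gdist_edge[OF g(1)] gdist_sym[OF in_V in_V, of a 0] by simp
  moreover have "\<not> level a \<le> 2" using lv by simp
  then have "\<not> central e (e 0)" unfolding central_def by blast
  moreover have "e a \<noteq> e 0" using lv by auto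
  ultimately have "g = e (0 - 1) \<or> g = e (0 + 1)"
    using predecessor_on_circuit[OF circuit narrow _ _ edge_sym[OF g(1)]] by blast
  then obtain s where s: "s = 1 \<or> s = -1" "g = e s" by force
  define f where "f k = e (s * k)" for k
  have f: "int_circuit f n" using int_circuit_affine[OF circuit s(1), of 0] unfolding f_def by simp
  define b where "b = (if s = 1 then a - 1 else - (a + 2))"
  have block: "(f b = e (a - 1) \<and> f (b + 1) = e a \<and> f (b + 2) = e (a + 1) \<and> f (b + 3) = e (a + 2)) \<or>
    (f b = e (a + 2) \<and> f (b + 1) = e (a + 1) \<and> f (b + 2) = e a \<and> f (b + 3) = e (a - 1))"
    using s(1) unfolding f_def b_def by (auto simp: algebra_simps)
  have f01: "f 0 = e 0" "f 1 = g" using s(2) unfolding f_def by simp_all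
  then have "f (b + j) = f (2 + j)" for j
    using block_position[OF f narrow, of b j] block lv g gdist_edge[OF g(1)] by auto
  from this[of 0] this[of 1] this[of 2] this[of 3]
  have "f 2 = f b" "f 3 = f (b + 1)" "f 4 = f (b + 2)" "f 5 = f (b + 3)" by simp_all
  with block have "pentagon f" "e a = f 3 \<or> e a = f 4"
    unfolding pentagon_def using lv g f01 by auto
  then show ?thesis using s(1) unfolding f_def by (auto simp: mult.commute)
qed

end

context short_isometric_circuits
begin

lemma max_level_pentagon:
  assumes c: "int_circuit c n" and narrow: "narrow_below n"
    and max: "\<And>k. \<delta> (c 0) (c k) \<le> L" and top: "\<delta> (c 0) (c q) = L" and L: "3 \<le> L"
  shows "L = 3 \<and> (\<exists>s. (s = 1 \<or> s = -1) \<and> pentagon (\<lambda>k. c (s * k)) \<and> (c q = c (3 * s) \<or> c q = c (4 * s)))"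
proof -
  have "\<delta> (c 0) (c (q - 1)) + 1 = L \<or> \<delta> (c 0) (c (q - (-1))) + 1 = L"
    using far_vertex_predecessor[OF c narrow, of q] top L by simp
  then obtain s0 :: int where s0: "s0 = 1 \<or> s0 = -1" "\<delta> (c 0) (c (q - s0)) + 1 = L" by blast
  then have s0s0: "s0 * s0 = 1" by auto
  define e where "e k = c (s0 * k)" for k
  have e: "int_circuit e n" using int_circuit_affine[OF c s0(1), of 0] unfolding e_def by simp
  interpret circuit_top V E e n L "s0 * q"
  proof
    show "\<delta> (e 0) (e k) \<le> L" for k using max unfolding e_def by simp
    show "\<delta> (e 0) (e (s0 * q)) = L" "\<delta> (e 0) (e (s0 * q - 1)) + 1 = L"
      using top s0 s0s0 unfolding e_def by (auto simp: algebra_simps)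
  qed (use e narrow L in auto)
  obtain s where s: "s = 1 \<or> s = -1" "pentagon (\<lambda>k. e (s * k))" "e (s0 * q) = e (3 * s) \<or> e (s0 * q) = e (4 * s)"
    using top_pentagon by blast
  have "(s0 * s = 1 \<or> s0 * s = -1) \<and> pentagon (\<lambda>k. c (s0 * s * k)) \<and>
    (c q = c (3 * (s0 * s)) \<or> c q = c (4 * (s0 * s)))"
    using s s0 s0s0 unfolding e_def by (auto simp: algebra_simps)
  then show ?thesis using top_level_eq_3 by blast
qed

lemma far_vertex_pentagon:
  assumes c: "int_circuit c n" and narrow: "narrow_below n" and far: "3 \<le> \<delta> (c 0) (c z)"
  shows "\<exists>s. (s = 1 \<or> s = -1) \<and> pentagon (\<lambda>k. c (s * k)) \<and> (c z = c (3 * s) \<or> c z = c (4 * s))"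
proof -
  define L where "L = Max ((\<lambda>k. \<delta> (c 0) (c k)) ` {0..<n})"
  have n: "0 < n" using int_circuit_ge_3[OF c] by simp
  have max: "\<delta> (c 0) (c k) \<le> L" for k
  proof -
    have "\<delta> (c 0) (c (k mod n)) \<le> L" unfolding L_def using n by (intro Max_ge) auto
    then show ?thesis using int_circuit_mod[OF c, of k] by simp
  qed
  have "L \<in> (\<lambda>k. \<delta> (c 0) (c k)) ` {0..<n}" unfolding L_def using n by (intro Max_in) auto
  then obtain q where "\<delta> (c 0) (c q) = L" by blast
  then have "L = 3" using max_level_pentagon[OF c narrow max] far max[of z] by simp
  then show ?thesis using max_level_pentagon[OF c narrow max, of z] far max[of z] by simp
qed

text \<open>The pentagon structure seen from \<open>e (-1)\<close> must run in the opposite direction.\<close>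
lemma pentagon_seen_from_pred:
  assumes e: "int_circuit e n" and narrow: "narrow_below n" and pe: "pentagon e"
    and far: "3 \<le> \<delta> (e (-1)) (e z)"
  shows "(e z = e (-4) \<or> e z = e (-5)) \<and> E (e (-2)) (e (-6))"
proof -
  define e' where "e' k = e (-1 + k)" for k
  have e': "int_circuit e' n" using int_circuit_shift[OF e] unfolding e'_def .
  have "\<not> pentagon e'"
  proof
    assume "pentagon e'"
    then have "E (e 0) (e 4)" unfolding pentagon_def e'_def by simp
    then show False using gdist_edge pe unfolding pentagon_def by simp
  qed
  moreover obtain s where "s = 1 \<or> s = -1" "pentagon (\<lambda>k. e' (s * k))"
    "e' (z + 1) = e' (3 * s) \<or> e' (z + 1) = e' (4 * s)"
    using far_vertex_pentagon[OF e' narrow, of "z + 1"] far unfolding e'_def by auto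
  ultimately have "s = -1" "pentagon (\<lambda>k. e' (- k))" "e' (z + 1) = e' (- 3) \<or> e' (z + 1) = e' (- 4)"
    by auto
  then show ?thesis unfolding pentagon_def e'_def by simp
qed

lemma no_pentagon:
  assumes e: "int_circuit e n" and narrow: "narrow_below n" and pe: "pentagon e"
  shows False
proof -
  note from_pred = pentagon_seen_from_pred[OF e narrow pe]
  have "e 3 = e (-4) \<or> e 3 = e (-5)" "e 4 = e (-4) \<or> e 4 = e (-5)" "E (e (-2)) (e (-6))"
    using from_pred pentagon_far_from_pred[OF e pe] by blast+
  then have A: "n dvd 7 \<or> n dvd 8" and B: "n dvd 8 \<or> n dvd 9"
    using int_circuit_eq_iff_dvd[OF e] by auto
  have "n \<le> 8" using A zdvd_imp_le by fastforce
  then have "n = 6 \<or> n = 7 \<or> n = 8" using pentagon_circuit_length[OF e pe] by auto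
  then have n: "n = 8" using A B by auto
  then have "e (-2) = e 6" "e (-6) = e 2" using int_circuit_eq_iff[OF e] by simp_all
  then have "E (e 2) (e 6)" using \<open>E (e (-2)) (e (-6))\<close> edge_sym by simp
  then show False using pentagon_no_octagon_chord[of e] e pe n by simp
qed

lemma no_far_pair:
  assumes c: "int_circuit c n" and narrow: "narrow_below n"
  shows "\<delta> (c p) (c z) \<le> 2"
proof (rule ccontr)
  assume "\<not> \<delta> (c p) (c z) \<le> 2"
  then have "3 \<le> \<delta> ((\<lambda>k. c (p + k)) 0) ((\<lambda>k. c (p + k)) (z - p))" by simp
  from far_vertex_pentagon[OF int_circuit_shift[OF c] narrow this]
  obtain s where s: "s = 1 \<or> s = -1" and "pentagon (\<lambda>k. c (p + s * k))" by auto
  then show False using no_pentagon[OF int_circuit_affine[OF c s] narrow] by blast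
qed

lemma list_circuit_narrow: "list_circuit xs \<Longrightarrow> a \<in> set xs \<Longrightarrow> b \<in> set xs \<Longrightarrow> \<delta> a b \<le> 2"
proof (induction "length xs" arbitrary: xs a b rule: less_induct)
  case less
  have "narrow_below (int (length xs))" unfolding narrow_below_def using less.hyps by auto
  moreover obtain i j where "i < length xs" "j < length xs" "a = xs ! i" "b = xs ! j"
    using less.prems(2,3) by (metis in_set_conv_nth)
  ultimately show ?case
    using no_far_pair[OF int_circuit_of_list_circuit[OF less.prems(1)], of "int i" "int j"] by simp
qed

end

theorem theorem2:
  fixes V :: "'a set" and E :: "'a \<Rightarrow> 'a \<Rightarrow> bool"
  assumes "simple_graph V E"
    and "locally_finite V E"
    and "geodetic V E"
    and "\<forall>u n. isometric_circuit E u n \<longrightarrow> n \<le> 5"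
  shows "\<forall>u n. embedded_circuit E u n \<longrightarrow> circuit_diameter E u n \<le> 2"
proof (intro allI impI)
  interpret short_isometric_circuits V E using assms(1,3,4) by unfold_locales
  fix u n assume u: "embedded_circuit E u n"
  have "gdist E (u i) (u j) \<le> 2" if "i \<le> n" "j \<le> n" for i j
  proof (cases "n \<le> 2")
    case True
    then show ?thesis using short_embedded_circuit_gdist[OF u _ that] by fastforce
  next
    case False
    then show ?thesis
      using list_circuit_narrow[OF embedded_circuit_list_circuit[OF u]] embedded_circuit_vertex_in_list[OF u] that
      by simp
  qed
  moreover have "finite {gdist E (u i) (u j) | i j. i \<le> n \<and> j \<le> n}"
    using finite_image_set2[of "\<lambda>i. i \<le> n" "\<lambda>j. j \<le> n"] by simp
  ultimately show "circuit_diameter E u n \<le> 2"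
    unfolding circuit_diameter_def by (subst Max_le_iff) auto
qed

end
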